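(* Let $1<p<\infty$ and let $T\in\mathbb{L}(\ell_p)$ with $\|T\|=1$. Suppose that $\operatorname{dist}(T,\mathbb{K}(\ell_p))<1$ and $M_T=\{\pm x_1,\pm x_2,\ldots,\pm x_k\}$, where $\{x_1,\ldots,x_k\}$ is linearly independent in $\ell_p$. Then $T$ is $k$-smooth.
   Context: $\mathbb{L}(\ell_p)$ ($\mathbb{K}(\ell_p)$) is the space of bounded (compact) linear operators on $\ell_p$ with the operator norm. $M_T=\{x\in\ell_p:\|x\|=1,\ \|Tx\|=\|T\|\}$. For a Banach space $\mathbb{Z}$ and a unit vector $z$, $J(z)=\{f\in \mathbb{Z}^*:\|f\|=1,\ f(z)=1\}$; $z$ is $k$-smooth if $\dim\operatorname{span} J(z)=k$; $T$ is $k$-smooth as a point of the unit sphere of $\mathbb{L}(\ell_p)$. *)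

theory Defs
  imports "HOL-Analysis.Analysis" "HOL-Library.Function_Algebras"
begin

definition fscale :: "real \<Rightarrow> ('a \<Rightarrow> real) \<Rightarrow> ('a \<Rightarrow> real)" where
  "fscale c f = (\<lambda>x. c * f x)"

definition lp :: "real \<Rightarrow> (nat \<Rightarrow> real) set" where
  "lp p = {x. summable (\<lambda>n. \<bar>x n\<bar> powr p)}"

definition lpnorm :: "real \<Rightarrow> (nat \<Rightarrow> real) \<Rightarrow> real" where
  "lpnorm p x = (\<Sum>n. \<bar>x n\<bar> powr p) powr (1 / p)"

text \<open>Bounded linear operators on l_p (extensional: zero outside l_p).\<close>

definition Lop :: "real \<Rightarrow> ((nat \<Rightarrow> real) \<Rightarrow> (nat \<Rightarrow> real)) set" where
  "Lop p = {T. (\<forall>x\<in>lp p. \<forall>y\<in>lp p. T (x + y) = T x + T y)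
              \<and> (\<forall>c. \<forall>x\<in>lp p. T (fscale c x) = fscale c (T x))
              \<and> (\<forall>x\<in>lp p. T x \<in> lp p)
              \<and> (\<exists>C. \<forall>x\<in>lp p. lpnorm p (T x) \<le> C * lpnorm p x)
              \<and> (\<forall>x. x \<notin> lp p \<longrightarrow> T x = 0)}"

definition opnorm :: "real \<Rightarrow> ((nat \<Rightarrow> real) \<Rightarrow> (nat \<Rightarrow> real)) \<Rightarrow> real" where
  "opnorm p T = Sup ((\<lambda>x. lpnorm p (T x)) ` {x \<in> lp p. lpnorm p x \<le> 1})"

text \<open>Compact operators: image of the unit ball is relatively compact
  (sequential form: every sequence in the unit ball has a subsequence whose
  images converge in l_p).\<close>

definition Kop :: "real \<Rightarrow> ((nat \<Rightarrow> real) \<Rightarrow> (nat \<Rightarrow> real)) set" where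
  "Kop p = {K \<in> Lop p. \<forall>s::nat \<Rightarrow> (nat \<Rightarrow> real). (\<forall>n. s n \<in> lp p \<and> lpnorm p (s n) \<le> 1) \<longrightarrow>
              (\<exists>(r::nat \<Rightarrow> nat) y. strict_mono r \<and> y \<in> lp p \<and>
                 (\<lambda>n. lpnorm p (K (s (r n)) - y)) \<longlonglongrightarrow> 0)}"

definition dist_Kop :: "real \<Rightarrow> ((nat \<Rightarrow> real) \<Rightarrow> (nat \<Rightarrow> real)) \<Rightarrow> real" where
  "dist_Kop p T = Inf ((\<lambda>K. opnorm p (T - K)) ` Kop p)"

definition MT :: "real \<Rightarrow> ((nat \<Rightarrow> real) \<Rightarrow> (nat \<Rightarrow> real)) \<Rightarrow> (nat \<Rightarrow> real) set" where
  "MT p T = {x \<in> lp p. lpnorm p x = 1 \<and> lpnorm p (T x) = opnorm p T}"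

definition Ldual :: "real \<Rightarrow> (((nat \<Rightarrow> real) \<Rightarrow> (nat \<Rightarrow> real)) \<Rightarrow> real) set" where
  "Ldual p = {f. (\<forall>S\<in>Lop p. \<forall>T\<in>Lop p. f (S + T) = f S + f T)
              \<and> (\<forall>c. \<forall>S\<in>Lop p. f (\<lambda>x. fscale c (S x)) = c * f S)
              \<and> (\<exists>C. \<forall>S\<in>Lop p. \<bar>f S\<bar> \<le> C * opnorm p S)
              \<and> (\<forall>S. S \<notin> Lop p \<longrightarrow> f S = 0)}"

definition dualnorm :: "real \<Rightarrow> (((nat \<Rightarrow> real) \<Rightarrow> (nat \<Rightarrow> real)) \<Rightarrow> real) \<Rightarrow> real" where
  "dualnorm p f = Sup ((\<lambda>S. \<bar>f S\<bar>) ` {S \<in> Lop p. opnorm p S \<le> 1})"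

definition Jset :: "real \<Rightarrow> ((nat \<Rightarrow> real) \<Rightarrow> (nat \<Rightarrow> real)) \<Rightarrow> (((nat \<Rightarrow> real) \<Rightarrow> (nat \<Rightarrow> real)) \<Rightarrow> real) set" where
  "Jset p T = {f \<in> Ldual p. dualnorm p f = 1 \<and> f T = 1}"

definition k_smooth :: "real \<Rightarrow> nat \<Rightarrow> ((nat \<Rightarrow> real) \<Rightarrow> (nat \<Rightarrow> real)) \<Rightarrow> bool" where
  "k_smooth p k T \<longleftrightarrow> (\<exists>B. finite B \<and> card B = k \<and> \<not> module.dependent fscale B
       \<and> module.span fscale B = module.span fscale (Jset p T))"

end

theory Submission
  imports Defs
begin

text \<open>
  Each pairing functional S \<mapsto> \<langle>J(T z), S z\<rangle>, with z \<in> M_T and J(u) the norming vector of u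
  in l_q, lies in J(T). Conversely, every f \<in> J(T) vanishes on each S annihilated by all of
  them: if f S > 0, then \<parallel>T + t S\<parallel> > 1 + t f S / 2 for small t > 0, and almost norming vectors
  of T + t S converge, along a subsequence, in norm to some z \<in> M_T with
  \<langle>J(T z), S z\<rangle> \<ge> f S / 2. This is where dist(T, K(l_p)) < 1 enters: write T = K + R with
  K compact and \<parallel>R\<parallel> < 1, and split the vectors into a coordinatewise limit plus a
  coordinatewise null part D_n. Then K D_n \<rightarrow> 0, and the Brezis-Lieb lemma, applied before and
  after T, shows that the norm lost in the limit is carried by D_n and by T D_n alike; as
  \<parallel>T D_n\<parallel> \<le> \<parallel>R\<parallel> \<parallel>D_n\<parallel> + o(1), this forces D_n \<rightarrow> 0. Hence J(T) spans the same space as the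
  k functionals of x_1, ..., x_k, which are independent, as their values on rank-one
  operators show.
\<close>

lemma fscale_apply [simp]: "fscale c f x = c * f x"
  by (simp add: fscale_def)

lemma fscale_zero_left [simp]: "fscale 0 x = 0"
  by (simp add: fscale_def fun_eq_iff)

lemma fscale_minus_one: "fscale (-1) x = - x"
  by (simp add: fscale_def fun_eq_iff)

interpretation fscale: module fscale
  by unfold_locales (auto simp: fscale_def fun_eq_iff algebra_simps)

lemma sum_apply: "(\<Sum>i\<in>A. f i) x = (\<Sum>i\<in>A. f i x)"
  by (induction A rule: infinite_finite_induct) auto

lemma lp_zero [simp]: "0 \<in> lp p"
  by (simp add: lp_def)

lemma lpnorm_zero [simp]: "lpnorm p 0 = 0"
  by (simp add: lpnorm_def)

lemma lpnorm_nonneg: "0 \<le> lpnorm p x"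
  by (simp add: lpnorm_def)

lemma lpnorm_uminus [simp]: "lpnorm p (- x) = lpnorm p x"
  by (simp add: lpnorm_def)

lemma lp_uminus: "x \<in> lp p \<Longrightarrow> - x \<in> lp p"
  by (simp add: lp_def)

lemma lp_fscale: assumes "x \<in> lp p" shows "fscale c x \<in> lp p"
proof -
  have "summable (\<lambda>n. \<bar>c\<bar> powr p * \<bar>x n\<bar> powr p)"
    using assms by (intro summable_mult) (simp add: lp_def)
  then show ?thesis by (simp add: lp_def abs_mult powr_mult)
qed

lemma suminf_powr_nonneg: "x \<in> lp p \<Longrightarrow> 0 \<le> (\<Sum>n. \<bar>x n\<bar> powr p)"
  by (intro suminf_nonneg) (auto simp: lp_def)

lemma lpnorm_powr: assumes "x \<in> lp p" "p > 0" shows "lpnorm p x powr p = (\<Sum>n. \<bar>x n\<bar> powr p)"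
  using assms suminf_powr_nonneg[OF assms(1)] by (simp add: lpnorm_def powr_powr)

lemma lpnorm_fscale:
  assumes "x \<in> lp p" "p > 0" shows "lpnorm p (fscale c x) = \<bar>c\<bar> * lpnorm p x"
proof -
  have "(\<Sum>n. \<bar>c * x n\<bar> powr p) = (\<Sum>n. \<bar>c\<bar> powr p * \<bar>x n\<bar> powr p)"
    by (simp add: abs_mult powr_mult)
  also have "\<dots> = \<bar>c\<bar> powr p * (\<Sum>n. \<bar>x n\<bar> powr p)"
    using assms by (intro suminf_mult) (simp add: lp_def)
  finally have *: "(\<Sum>n. \<bar>c * x n\<bar> powr p) = \<bar>c\<bar> powr p * (\<Sum>n. \<bar>x n\<bar> powr p)" .
  have "(\<bar>c\<bar> powr p) powr (1/p) = \<bar>c\<bar>" using assms by (simp add: powr_powr)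
  then show ?thesis unfolding lpnorm_def fscale_def *
    using suminf_powr_nonneg[OF assms(1)] by (simp add: powr_mult)
qed

lemma abs_add_powr_le:
  fixes u v :: real assumes "p > 0"
  shows "\<bar>u + v\<bar> powr p \<le> 2 powr p * (\<bar>u\<bar> powr p + \<bar>v\<bar> powr p)"
proof -
  have "\<bar>u + v\<bar> powr p \<le> (2 * max \<bar>u\<bar> \<bar>v\<bar>) powr p"
    using assms by (intro powr_mono2) auto
  also have "\<dots> = 2 powr p * max \<bar>u\<bar> \<bar>v\<bar> powr p" by (simp add: powr_mult)
  also have "max \<bar>u\<bar> \<bar>v\<bar> powr p \<le> \<bar>u\<bar> powr p + \<bar>v\<bar> powr p"
    by (cases "\<bar>u\<bar> \<le> \<bar>v\<bar>") (auto simp: max_def)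
  finally show ?thesis by simp
qed

lemma lp_add: assumes "x \<in> lp p" "y \<in> lp p" "p > 0" shows "x + y \<in> lp p"
proof -
  have "summable (\<lambda>n. 2 powr p * (\<bar>x n\<bar> powr p + \<bar>y n\<bar> powr p))"
    using assms by (intro summable_mult summable_add) (auto simp: lp_def)
  then have "summable (\<lambda>n. \<bar>x n + y n\<bar> powr p)"
    by (rule summable_comparison_test') (use abs_add_powr_le[OF assms(3)] in auto)
  then show ?thesis by (simp add: lp_def)
qed

lemma lp_diff: "x \<in> lp p \<Longrightarrow> y \<in> lp p \<Longrightarrow> p > 0 \<Longrightarrow> x - y \<in> lp p"
  using lp_add[of x p "- y"] lp_uminus[of y p] by simp

lemma abs_le_lpnorm: assumes "x \<in> lp p" "p > 0" shows "\<bar>x m\<bar> \<le> lpnorm p x"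
proof -
  have "\<bar>x m\<bar> powr p \<le> (\<Sum>n. \<bar>x n\<bar> powr p)"
    using assms sum_le_suminf[of "\<lambda>n. \<bar>x n\<bar> powr p" "{m}"] by (auto simp: lp_def)
  then have "(\<bar>x m\<bar> powr p) powr (1/p) \<le> (\<Sum>n. \<bar>x n\<bar> powr p) powr (1/p)"
    using assms by (intro powr_mono2) auto
  then show ?thesis using assms by (simp add: lpnorm_def powr_powr)
qed

lemma lpnorm_eq_0D: assumes "x \<in> lp p" "p > 0" "lpnorm p x = 0" shows "x = 0"
  using abs_le_lpnorm[OF assms(1,2)] assms(3) by (auto intro!: ext)

lemma tendsto_coordinate_of_lpnorm:
  assumes p: "p > 0" and u: "\<And>n. u n \<in> lp p" and y: "y \<in> lp p"
    and lim: "(\<lambda>n. lpnorm p (u n - y)) \<longlonglongrightarrow> 0"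
  shows "(\<lambda>n. u n m) \<longlonglongrightarrow> y m"
proof -
  have "(\<lambda>n. u n m - y m) \<longlonglongrightarrow> 0"
  proof (rule Lim_null_comparison[OF _ lim])
    show "\<forall>\<^sub>F n in sequentially. norm (u n m - y m) \<le> lpnorm p (u n - y)"
      using abs_le_lpnorm[OF lp_diff[OF u y p] p] by simp
  qed
  then show ?thesis by (rule LIM_zero_cancel)
qed

definition conjugate_exponents :: "real \<Rightarrow> real \<Rightarrow> bool" where
  "conjugate_exponents p q \<longleftrightarrow> 1 < p \<and> 1 < q \<and> 1/p + 1/q = 1"

lemma conjugate_exponents_sym: "conjugate_exponents p q \<Longrightarrow> conjugate_exponents q p"
  by (auto simp: conjugate_exponents_def)

lemma conjugate_exponentsD: "conjugate_exponents p q \<Longrightarrow> 1 < p \<and> 1 < q"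
  by (auto simp: conjugate_exponents_def)

lemma conjugate_exponents_mult: "conjugate_exponents p q \<Longrightarrow> (p - 1) * q = p"
  by (auto simp: conjugate_exponents_def field_simps)

lemma conjugate_exponents_divide: "1 < p \<Longrightarrow> conjugate_exponents p (p / (p - 1))"
  by (auto simp: conjugate_exponents_def field_simps)

lemma lp_holder:
  assumes c: "conjugate_exponents p q" and a: "a \<in> lp p" and b: "b \<in> lp q"
  shows "summable (\<lambda>n. \<bar>a n * b n\<bar>) \<and> (\<Sum>n. \<bar>a n * b n\<bar>) \<le> lpnorm p a * lpnorm q b"
proof (cases "lpnorm p a = 0 \<or> lpnorm q b = 0")
  case True
  then have "a = 0 \<or> b = 0"
    using lpnorm_eq_0D[OF a] lpnorm_eq_0D[OF b] conjugate_exponentsD[OF c] by auto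
  then show ?thesis by auto
next
  case False
  define A where "A = lpnorm p a"
  define B where "B = lpnorm q b"
  have A: "A > 0" and B: "B > 0" using False lpnorm_nonneg[of p a] lpnorm_nonneg[of q b]
    by (auto simp: A_def B_def)
  have pq: "p > 0" "q > 0" "1/p + 1/q = 1" using c by (auto simp: conjugate_exponents_def)
  define g where "g n = \<bar>a n\<bar> powr p / (A powr p * p) + \<bar>b n\<bar> powr q / (B powr q * q)" for n
  have le: "\<bar>a n * b n\<bar> \<le> A * B * g n" for n
  proof -
    have "(\<bar>a n\<bar> / A) * (\<bar>b n\<bar> / B) \<le> (\<bar>a n\<bar> / A) powr p / p + (\<bar>b n\<bar> / B) powr q / q"
      using Youngs_inequality[of p q "\<bar>a n\<bar> / A" "\<bar>b n\<bar> / B"] c A B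
      by (auto simp: conjugate_exponents_def)
    also have "\<dots> = g n" using A B by (simp add: g_def powr_divide)
    finally show ?thesis using A B by (simp add: field_simps abs_mult)
  qed
  have sa: "summable (\<lambda>n. \<bar>a n\<bar> powr p)" and sb: "summable (\<lambda>n. \<bar>b n\<bar> powr q)"
    using a b by (auto simp: lp_def)
  have sg: "summable g" unfolding g_def by (intro summable_add summable_divide sa sb)
  have "suminf g = (\<Sum>n. \<bar>a n\<bar> powr p) / (A powr p * p) + (\<Sum>n. \<bar>b n\<bar> powr q) / (B powr q * q)"
    unfolding g_def by (simp add: suminf_add[symmetric] suminf_divide summable_divide sa sb)
  also have "\<dots> = 1"
    using lpnorm_powr[OF a, symmetric] lpnorm_powr[OF b, symmetric] pq A B
    by (simp add: A_def B_def)
  finally have sum_g: "suminf g = 1" .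
  have sABg: "summable (\<lambda>n. A * B * g n)" using sg by (rule summable_mult)
  have sab: "summable (\<lambda>n. \<bar>a n * b n\<bar>)"
    by (rule summable_comparison_test'[OF sABg]) (use le in auto)
  have "(\<Sum>n. \<bar>a n * b n\<bar>) \<le> (\<Sum>n. A * B * g n)"
    by (rule suminf_le[OF le sab sABg])
  also have "\<dots> = A * B" using sg sum_g by (simp add: suminf_mult)
  finally show ?thesis using sab by (simp add: A_def B_def)
qed

definition lp_pair :: "(nat \<Rightarrow> real) \<Rightarrow> (nat \<Rightarrow> real) \<Rightarrow> real" where
  "lp_pair b x = (\<Sum>n. b n * x n)"

lemma lp_pair_commute: "lp_pair b x = lp_pair x b"
  by (simp add: lp_pair_def mult.commute)

lemma lp_pair_uminus: "lp_pair (- b) (- x) = lp_pair b x"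
  by (simp add: lp_pair_def)

lemma summable_abs_lp_pair:
  assumes "conjugate_exponents p q" "x \<in> lp p" "b \<in> lp q"
  shows "summable (\<lambda>n. \<bar>b n * x n\<bar>)"
  using lp_holder[OF assms] by (simp add: mult.commute)

lemma abs_lp_pair_le:
  assumes "conjugate_exponents p q" "x \<in> lp p" "b \<in> lp q"
  shows "\<bar>lp_pair b x\<bar> \<le> lpnorm q b * lpnorm p x"
proof -
  have "\<bar>lp_pair b x\<bar> \<le> (\<Sum>n. \<bar>b n * x n\<bar>)"
    unfolding lp_pair_def by (rule summable_rabs[OF summable_abs_lp_pair[OF assms]])
  also have "\<dots> \<le> lpnorm q b * lpnorm p x"
    using lp_holder[OF assms] by (simp add: mult.commute)
  finally show ?thesis .
qed

lemma lp_pair_add_right: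
  assumes "conjugate_exponents p q" "x \<in> lp p" "y \<in> lp p" "b \<in> lp q"
  shows "lp_pair b (x + y) = lp_pair b x + lp_pair b y"
  using summable_rabs_cancel[OF summable_abs_lp_pair[OF assms(1,2,4)]]
    summable_rabs_cancel[OF summable_abs_lp_pair[OF assms(1,3,4)]]
  by (simp add: lp_pair_def distrib_left suminf_add)

lemma lp_pair_fscale_right:
  assumes "conjugate_exponents p q" "x \<in> lp p" "b \<in> lp q"
  shows "lp_pair b (fscale c x) = c * lp_pair b x"
  using suminf_mult[OF summable_rabs_cancel[OF summable_abs_lp_pair[OF assms]], of c]
  by (simp add: lp_pair_def algebra_simps)

lemma lp_pair_diff_right:
  assumes "conjugate_exponents p q" "x \<in> lp p" "y \<in> lp p" "b \<in> lp q"
  shows "lp_pair b (x - y) = lp_pair b x - lp_pair b y"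
  using lp_pair_add_right[OF assms(1,2) lp_uminus[OF assms(3)] assms(4)]
    lp_pair_fscale_right[OF assms(1,3,4), of "-1"]
  by (simp add: fscale_minus_one)

definition duality_map :: "real \<Rightarrow> (nat \<Rightarrow> real) \<Rightarrow> (nat \<Rightarrow> real)" where
  "duality_map p u = (\<lambda>n. sgn (u n) * \<bar>u n\<bar> powr (p - 1) / lpnorm p u powr (p - 1))"

lemma duality_map_uminus: "duality_map p (- u) = - duality_map p u"
  by (simp add: duality_map_def fun_eq_iff sgn_minus)

lemma duality_map_norming:
  assumes c: "conjugate_exponents p q" and u: "u \<in> lp p" "u \<noteq> 0"
  shows "duality_map p u \<in> lp q" "lpnorm q (duality_map p u) = 1"
    "lp_pair (duality_map p u) u = lpnorm p u"
proof -
  have p: "p > 0" using conjugate_exponentsD[OF c] by simp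
  define N where "N = lpnorm p u"
  have N: "N > 0"
    using lpnorm_eq_0D[OF u(1) p] u(2) lpnorm_nonneg[of p u] by (force simp: N_def)
  have NP: "N powr p = (\<Sum>n. \<bar>u n\<bar> powr p)" using lpnorm_powr[OF u(1) p] by (simp add: N_def)
  have su: "summable (\<lambda>n. \<bar>u n\<bar> powr p)" using u by (simp add: lp_def)
  have J_powr: "\<bar>duality_map p u n\<bar> powr q = \<bar>u n\<bar> powr p / N powr p" for n
  proof -
    have "\<bar>duality_map p u n\<bar> = \<bar>u n\<bar> powr (p - 1) / N powr (p - 1)"
      by (simp add: duality_map_def N_def abs_mult abs_sgn_eq)
    then show ?thesis
      by (simp add: powr_divide powr_powr conjugate_exponents_mult[OF c])
  qed
  have "summable (\<lambda>n. \<bar>duality_map p u n\<bar> powr q)" unfolding J_powr by (intro summable_divide su)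
  then show "duality_map p u \<in> lp q" by (simp add: lp_def)
  have "(\<Sum>n. \<bar>duality_map p u n\<bar> powr q) = 1"
    unfolding J_powr suminf_divide[OF su] NP[symmetric] using N by simp
  then show "lpnorm q (duality_map p u) = 1" by (simp add: lpnorm_def)
  have pair_terms: "duality_map p u n * u n = \<bar>u n\<bar> powr p / N powr (p - 1)" for n
  proof (cases "u n = 0")
    case False
    have "\<bar>u n\<bar> powr (p - 1) * \<bar>u n\<bar> = \<bar>u n\<bar> powr p"
      using False by (simp add: powr_diff)
    then show ?thesis using False by (auto simp: duality_map_def N_def sgn_if)
  qed (simp add: duality_map_def)
  have "lp_pair (duality_map p u) u = (\<Sum>n. \<bar>u n\<bar> powr p) / N powr (p - 1)"
    unfolding lp_pair_def pair_terms by (rule suminf_divide[OF su])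
  also have "\<dots> = N" unfolding NP[symmetric] using N by (simp add: powr_diff)
  finally show "lp_pair (duality_map p u) u = lpnorm p u" by (simp add: N_def)
qed

lemma lpnorm_add_le:
  assumes p: "1 < p" and x: "x \<in> lp p" and y: "y \<in> lp p"
  shows "lpnorm p (x + y) \<le> lpnorm p x + lpnorm p y"
proof (cases "x + y = 0")
  case True then show ?thesis using lpnorm_nonneg[of p x] lpnorm_nonneg[of p y] by simp
next
  case False
  note c = conjugate_exponents_divide[OF p]
  have xy: "x + y \<in> lp p" using lp_add[OF x y] p by simp
  note J = duality_map_norming[OF c xy False]
  have "lpnorm p (x + y) = lp_pair (duality_map p (x + y)) x + lp_pair (duality_map p (x + y)) y"
    using J(3) lp_pair_add_right[OF c x y J(1)] by simp
  also have "\<dots> \<le> 1 * lpnorm p x + 1 * lpnorm p y"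
    using abs_lp_pair_le[OF c x J(1)] abs_lp_pair_le[OF c y J(1)] J(2) by (intro add_mono) auto
  finally show ?thesis by simp
qed

lemma lpnorm_tendsto:
  assumes p: "1 < p" and u: "\<And>n. u n \<in> lp p" "u0 \<in> lp p"
    and lim: "(\<lambda>n. lpnorm p (u n - u0)) \<longlonglongrightarrow> 0"
  shows "(\<lambda>n. lpnorm p (u n)) \<longlonglongrightarrow> lpnorm p u0"
proof -
  have "\<bar>lpnorm p (u n) - lpnorm p u0\<bar> \<le> lpnorm p (u n - u0)" for n
  proof -
    have "lpnorm p (u n) \<le> lpnorm p (u n - u0) + lpnorm p u0"
      using lpnorm_add_le[OF p lp_diff[OF u(1) u(2)] u(2)] p by simp
    moreover have "lpnorm p u0 \<le> lpnorm p (u0 - u n) + lpnorm p (u n)"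
      using lpnorm_add_le[OF p lp_diff[OF u(2) u(1)[of n]] u(1)[of n]] p by simp
    moreover have "lpnorm p (u0 - u n) = lpnorm p (u n - u0)"
      using lpnorm_uminus[of p "u n - u0"] by simp
    ultimately show ?thesis by linarith
  qed
  then have "(\<lambda>n. lpnorm p (u n) - lpnorm p u0) \<longlonglongrightarrow> 0"
    by (intro Lim_null_comparison[OF _ lim]) auto
  then show ?thesis by (rule LIM_zero_cancel)
qed

definition trunc_seq :: "nat \<Rightarrow> (nat \<Rightarrow> real) \<Rightarrow> (nat \<Rightarrow> real)" where
  "trunc_seq N x = (\<lambda>n. if n < N then x n else 0)"

definition tail_seq :: "nat \<Rightarrow> (nat \<Rightarrow> real) \<Rightarrow> (nat \<Rightarrow> real)" where
  "tail_seq N x = (\<lambda>n. if n < N then 0 else x n)"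

lemma trunc_seq_add_tail_seq: "trunc_seq N x + tail_seq N x = x"
  by (auto simp: trunc_seq_def tail_seq_def)

lemma lp_trunc_seq: "trunc_seq N x \<in> lp p"
proof -
  have "summable (\<lambda>n. \<bar>trunc_seq N x n\<bar> powr p)"
    by (rule summable_finite[of "{..<N}"]) (auto simp: trunc_seq_def)
  then show ?thesis by (simp add: lp_def)
qed

lemma lp_tail_seq: assumes "x \<in> lp p" shows "tail_seq N x \<in> lp p"
proof -
  have "summable (\<lambda>n. \<bar>tail_seq N x n\<bar> powr p)"
    by (rule summable_comparison_test'[of "\<lambda>n. \<bar>x n\<bar> powr p"])
      (use assms in \<open>auto simp: lp_def tail_seq_def\<close>)
  then show ?thesis by (simp add: lp_def)
qed

lemma lpnorm_trunc_seq: "lpnorm p (trunc_seq N x) = (\<Sum>n<N. \<bar>x n\<bar> powr p) powr (1/p)"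
  unfolding lpnorm_def trunc_seq_def by (subst suminf_finite[of "{..<N}"]) auto

lemma lp_pair_trunc_seq: "lp_pair b (trunc_seq N x) = (\<Sum>n<N. b n * x n)"
  unfolding lp_pair_def trunc_seq_def by (subst suminf_finite[of "{..<N}"]) auto

lemma lpnorm_tail_seq_tendsto_0:
  assumes "x \<in> lp p" "p > 0" shows "(\<lambda>N. lpnorm p (tail_seq N x)) \<longlonglongrightarrow> 0"
proof -
  have sx: "summable (\<lambda>n. \<bar>x n\<bar> powr p)" using assms by (simp add: lp_def)
  have "(\<Sum>n. \<bar>tail_seq N x n\<bar> powr p) = (\<Sum>n. \<bar>x n\<bar> powr p) - (\<Sum>n<N. \<bar>x n\<bar> powr p)" for N
  proof -
    have "(\<lambda>n. \<bar>trunc_seq N x n\<bar> powr p) = (\<lambda>n. if n \<in> {..<N} then \<bar>x n\<bar> powr p else 0)"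
      by (auto simp: trunc_seq_def)
    then have "(\<lambda>n. \<bar>trunc_seq N x n\<bar> powr p) sums (\<Sum>n<N. \<bar>x n\<bar> powr p)"
      using sums_If_finite_set[of "{..<N}"] by simp
    moreover have "(\<lambda>n. \<bar>tail_seq N x n\<bar> powr p) = (\<lambda>n. \<bar>x n\<bar> powr p - \<bar>trunc_seq N x n\<bar> powr p)"
      by (auto simp: trunc_seq_def tail_seq_def)
    ultimately show ?thesis using sums_diff[OF summable_sums[OF sx]] by (simp add: sums_iff)
  qed
  then have "(\<lambda>N. (\<Sum>n. \<bar>tail_seq N x n\<bar> powr p)) \<longlonglongrightarrow> 0"
    using tendsto_diff[OF tendsto_const summable_LIMSEQ[OF sx], of "\<Sum>n. \<bar>x n\<bar> powr p"]
    by simp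
  then have "(\<lambda>N. (\<Sum>n. \<bar>tail_seq N x n\<bar> powr p) powr (1/p)) \<longlonglongrightarrow> 0"
    by (rule tendsto_zero_powrI[where b="1/p"])
      (use assms lp_tail_seq[OF assms(1)] suminf_powr_nonneg in auto)
  then show ?thesis by (simp add: lpnorm_def)
qed

lemma lp_pair_split:
  assumes "conjugate_exponents p q" "x \<in> lp p" "b \<in> lp q"
  shows "lp_pair b x = (\<Sum>n<N. b n * x n) + lp_pair b (tail_seq N x)"
  using lp_pair_add_right[OF assms(1) lp_trunc_seq[of N x] lp_tail_seq[OF assms(2), of N] assms(3)]
  by (simp add: trunc_seq_add_tail_seq lp_pair_trunc_seq)

lemma lp_pair_tendsto_coordinatewise:
  assumes c: "conjugate_exponents p q" and x: "x \<in> lp p"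
    and b: "\<And>k. b k \<in> lp q" "\<And>k. lpnorm q (b k) \<le> B" "b0 \<in> lp q"
    and lim: "\<And>n. (\<lambda>k. b k n) \<longlonglongrightarrow> b0 n"
  shows "(\<lambda>k. lp_pair (b k) x) \<longlonglongrightarrow> lp_pair b0 x"
proof -
  have pq: "1 < p" "1 < q" using conjugate_exponentsD[OF c] by auto
  define d where "d k = b k - b0" for k
  define M where "M = B + lpnorm q b0 + 1"
  have d: "d k \<in> lp q" for k using lp_diff[OF b(1) b(3)] pq by (simp add: d_def)
  have dM: "lpnorm q (d k) \<le> M" for k
    using lpnorm_add_le[OF pq(2) b(1)[of k] lp_uminus[OF b(3)]] b(2)[of k]
    by (simp add: d_def M_def)
  have M: "M > 0" using b(2)[of 0] lpnorm_nonneg[of q "b 0"] lpnorm_nonneg[of q b0]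
    by (simp add: M_def)
  have "(\<lambda>k. lp_pair (d k) x) \<longlonglongrightarrow> 0"
  proof (rule LIMSEQ_I)
    fix r :: real assume r: "r > 0"
    have "\<forall>\<^sub>F N in sequentially. lpnorm p (tail_seq N x) < r / (2 * M)"
      using lpnorm_tail_seq_tendsto_0[OF x] pq r M by (auto simp: order_tendsto_iff)
    then obtain N where N: "lpnorm p (tail_seq N x) < r / (2 * M)"
      by (auto simp: eventually_sequentially)
    have "(\<lambda>k. \<Sum>n<N. d k n * x n) \<longlonglongrightarrow> (\<Sum>n<N. 0 * x n)"
      using lim unfolding d_def by (intro tendsto_intros) (simp add: LIM_zero)
    then have "(\<lambda>k. \<bar>\<Sum>n<N. d k n * x n\<bar>) \<longlonglongrightarrow> 0" by (simp add: tendsto_rabs_zero)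
    then have "\<forall>\<^sub>F k in sequentially. \<bar>\<Sum>n<N. d k n * x n\<bar> < r / 2"
      using r by (intro order_tendstoD(2)) auto
    then obtain k0 where k0: "\<And>k. k \<ge> k0 \<Longrightarrow> \<bar>\<Sum>n<N. d k n * x n\<bar> < r / 2"
      by (auto simp: eventually_sequentially)
    show "\<exists>k0. \<forall>k\<ge>k0. norm (lp_pair (d k) x - 0) < r"
    proof (intro exI allI impI)
      fix k assume "k \<ge> k0"
      have "\<bar>lp_pair (d k) (tail_seq N x)\<bar> \<le> lpnorm q (d k) * lpnorm p (tail_seq N x)"
        by (rule abs_lp_pair_le[OF c lp_tail_seq[OF x] d])
      also have "\<dots> \<le> M * (r / (2 * M))"
        using dM[of k] N lpnorm_nonneg[of q "d k"] lpnorm_nonneg[of p "tail_seq N x"]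
        by (intro mult_mono) auto
      also have "\<dots> = r / 2" using M by simp
      finally show "norm (lp_pair (d k) x - 0) < r"
        using lp_pair_split[OF c x d, of k N] k0[OF \<open>k \<ge> k0\<close>] by simp
    qed
  qed
  moreover have "lp_pair (b k) x - lp_pair b0 x = lp_pair (d k) x" for k
    using lp_pair_diff_right[OF conjugate_exponents_sym[OF c] b(1)[of k] b(3) x]
    by (simp add: lp_pair_commute d_def)
  ultimately have "(\<lambda>k. lp_pair (b k) x - lp_pair b0 x) \<longlonglongrightarrow> 0" by simp
  then show ?thesis by (rule LIM_zero_cancel)
qed

lemma lp_unit_ball_coordinatewise_subseq:
  fixes s :: "nat \<Rightarrow> nat \<Rightarrow> real"
  assumes p: "p > 0" and s: "\<And>n. s n \<in> lp p" "\<And>n. lpnorm p (s n) \<le> 1"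
  obtains r z where "strict_mono r" "z \<in> lp p" "lpnorm p z \<le> 1"
    "\<And>m. (\<lambda>n. s (r n) m) \<longlonglongrightarrow> z m"
proof -
  define S where "S = PiE UNIV (\<lambda>_::nat. {-1..1::real})"
  have "compactin (product_topology (\<lambda>_. euclidean) UNIV) S"
    unfolding S_def by (simp add: compactin_PiE compactin_euclidean_iff)
  then have "seq_compact S"
    by (simp add: euclidean_product_topology compactin_euclidean_iff compact_imp_seq_compact)
  moreover have "s n \<in> S" for n
  proof -
    have "\<bar>s n m\<bar> \<le> 1" for m using abs_le_lpnorm[OF s(1) p, of n m] s(2)[of n] by linarith
    then show ?thesis by (auto simp: S_def PiE_iff abs_le_iff)
  qed
  ultimately obtain l r where r: "strict_mono r" and lim: "(s \<circ> r) \<longlonglongrightarrow> l"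
    using seq_compactE[of S s] by blast
  have coord: "(\<lambda>n. s (r n) m) \<longlonglongrightarrow> l m" for m
    using continuous_on_tendsto_compose[OF continuous_on_product_coordinates lim] by simp
  have part: "(\<Sum>m<N. \<bar>l m\<bar> powr p) \<le> 1" for N
  proof (rule LIMSEQ_le_const2)
    show "(\<lambda>n. \<Sum>m<N. \<bar>s (r n) m\<bar> powr p) \<longlonglongrightarrow> (\<Sum>m<N. \<bar>l m\<bar> powr p)"
      using p by (intro tendsto_sum tendsto_powr2 tendsto_rabs coord tendsto_const) auto
    have "(\<Sum>m<N. \<bar>s (r n) m\<bar> powr p) \<le> 1" for n
    proof -
      have "(\<Sum>m<N. \<bar>s (r n) m\<bar> powr p) \<le> (\<Sum>m. \<bar>s (r n) m\<bar> powr p)"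
        using s(1)[of "r n"] by (intro sum_le_suminf) (auto simp: lp_def)
      also have "\<dots> = lpnorm p (s (r n)) powr p" using lpnorm_powr[OF s(1) p] by simp
      also have "\<dots> \<le> 1 powr p" using s(2)[of "r n"] p lpnorm_nonneg by (intro powr_mono2) auto
      finally show ?thesis by simp
    qed
    then show "\<exists>N'. \<forall>n\<ge>N'. (\<Sum>m<N. \<bar>s (r n) m\<bar> powr p) \<le> 1" by blast
  qed
  have sl: "summable (\<lambda>m. \<bar>l m\<bar> powr p)" by (rule summableI_nonneg_bounded[OF _ part]) auto
  have "(\<Sum>m. \<bar>l m\<bar> powr p) \<le> 1" by (rule suminf_le_const[OF sl part])
  then have "lpnorm p l \<le> 1 powr (1/p)" unfolding lpnorm_def
    using suminf_nonneg[OF sl] p by (intro powr_mono2) auto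
  then show ?thesis using that[OF r _ _ coord] sl by (simp add: lp_def)
qed

lemma abs_powr_add_diff_le:
  fixes p e :: real
  assumes p: "p > 0" and e: "e > 0"
  obtains C where "\<And>u v. \<bar>\<bar>u + v\<bar> powr p - \<bar>v\<bar> powr p\<bar> \<le> e * \<bar>v\<bar> powr p + C * \<bar>u\<bar> powr p"
proof -
  have "((\<lambda>s. \<bar>1 + s\<bar> powr p) \<longlongrightarrow> \<bar>1 + 0\<bar> powr p) (at 0)"
    by (intro tendsto_intros) auto
  then have "\<forall>\<^sub>F s in at 0. dist (\<bar>1 + s\<bar> powr p) 1 < e" using e by (simp add: tendsto_iff)
  then obtain t where t: "t > 0" and near': "\<And>s. s \<noteq> 0 \<Longrightarrow> \<bar>s\<bar> < t \<Longrightarrow> dist (\<bar>1 + s\<bar> powr p) 1 < e"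
    unfolding eventually_at by (auto simp: dist_real_def)
  have near: "\<bar>\<bar>1 + s\<bar> powr p - 1\<bar> < e" if "\<bar>s\<bar> < t" for s
    using near'[OF _ that] e by (cases "s = 0") (auto simp: dist_real_def)
  define C where "C = (1 + 1/t) powr p"
  have "\<bar>\<bar>u + v\<bar> powr p - \<bar>v\<bar> powr p\<bar> \<le> e * \<bar>v\<bar> powr p + C * \<bar>u\<bar> powr p" for u v :: real
  proof (cases "\<bar>u\<bar> < t * \<bar>v\<bar>")
    case True
    then have v: "v \<noteq> 0" using t by auto
    define X where "X = \<bar>1 + u / v\<bar> powr p"
    have "u + v = (1 + u / v) * v" using v by (simp add: field_simps)
    then have "\<bar>u + v\<bar> powr p - \<bar>v\<bar> powr p = (X - 1) * \<bar>v\<bar> powr p"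
      by (simp add: X_def abs_mult powr_mult left_diff_distrib)
    moreover have "\<bar>X - 1\<bar> \<le> e"
      using near[of "u / v"] True v by (simp add: X_def pos_divide_less_eq)
    ultimately have "\<bar>\<bar>u + v\<bar> powr p - \<bar>v\<bar> powr p\<bar> \<le> e * \<bar>v\<bar> powr p"
      by (simp add: abs_mult mult_right_mono)
    moreover have "0 \<le> C * \<bar>u\<bar> powr p" by (simp add: C_def)
    ultimately show ?thesis by linarith
  next
    case False
    then have "\<bar>v\<bar> \<le> \<bar>u\<bar> / t" using t by (simp add: pos_le_divide_eq mult.commute)
    then have "\<bar>v\<bar> \<le> (1 + 1/t) * \<bar>u\<bar>" "\<bar>u + v\<bar> \<le> (1 + 1/t) * \<bar>u\<bar>"
      using abs_triangle_ineq[of u v] by (simp_all add: distrib_right)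
    then have "\<bar>v\<bar> powr p \<le> C * \<bar>u\<bar> powr p" "\<bar>u + v\<bar> powr p \<le> C * \<bar>u\<bar> powr p"
      unfolding C_def using t p by (simp_all add: powr_mult[symmetric] powr_mono2)
    moreover have "0 \<le> e * \<bar>v\<bar> powr p" "0 \<le> \<bar>v\<bar> powr p" "0 \<le> \<bar>u + v\<bar> powr p"
      using e by simp_all
    ultimately show ?thesis unfolding abs_le_iff by linarith
  qed
  then show ?thesis by (rule that)
qed

lemma brezis_lieb:
  assumes p: "p > 0" and a: "a \<in> lp p"
    and d: "\<And>n. d n \<in> lp p" "\<And>n. lpnorm p (d n) \<le> B" and lim: "\<And>m. (\<lambda>n. d n m) \<longlonglongrightarrow> 0"
  shows "(\<lambda>n. lpnorm p (a + d n) powr p - lpnorm p (d n) powr p) \<longlonglongrightarrow> lpnorm p a powr p"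
proof -
  define A where "A = (\<lambda>m. \<bar>a m\<bar> powr p)"
  define F where "F = (\<lambda>n m. \<bar>a m + d n m\<bar> powr p - \<bar>d n m\<bar> powr p)"
  have sA: "summable A" using a by (simp add: lp_def A_def)
  have sd: "summable (\<lambda>m. \<bar>d n m\<bar> powr p)" for n using d(1) by (simp add: lp_def)
  have sad: "summable (\<lambda>m. \<bar>a m + d n m\<bar> powr p)" for n using lp_add[OF a d(1) p] by (simp add: lp_def)
  have sF: "summable (F n)" for n unfolding F_def by (intro summable_diff sad sd)
  have F_sum: "lpnorm p (a + d n) powr p - lpnorm p (d n) powr p = suminf (F n)" for n
    using lpnorm_powr[OF lp_add[OF a d(1) p] p] lpnorm_powr[OF d(1) p] suminf_diff[OF sad sd]
    by (simp add: F_def)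
  define Bp where "Bp = max B 0 powr p"
  have dB: "(\<Sum>m. \<bar>d n m\<bar> powr p) \<le> Bp" for n
  proof -
    have "lpnorm p (d n) powr p \<le> max B 0 powr p"
      using d(2)[of n] lpnorm_nonneg[of p "d n"] p by (intro powr_mono2) auto
    then show ?thesis using lpnorm_powr[OF d(1) p, of n] by (simp add: Bp_def)
  qed
  have "(\<lambda>n. suminf (F n)) \<longlonglongrightarrow> suminf A"
  proof (rule LIMSEQ_I)
    fix r :: real assume r: "r > 0"
    define e where "e = r / (2 * (Bp + 1))"
    have "0 \<le> Bp" by (simp add: Bp_def)
    then have e: "e > 0" "e * Bp < r / 2" using r by (auto simp: e_def field_simps)
    obtain C where C: "\<And>u v. \<bar>\<bar>u + v\<bar> powr p - \<bar>v\<bar> powr p\<bar> \<le> e * \<bar>v\<bar> powr p + C * \<bar>u\<bar> powr p"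
      using abs_powr_add_diff_le[OF p e(1)] by blast
    \<comment> \<open>the part of |F n - A| not controlled by e |d n|^p is dominated by (|C| + 1) A and tends
      to 0 pointwise, so Tannery's theorem applies to it\<close>
    define G where "G = (\<lambda>n m. max 0 (\<bar>F n m - A m\<bar> - e * \<bar>d n m\<bar> powr p))"
    have G: "0 \<le> G n m" "G n m \<le> (\<bar>C\<bar> + 1) * A m" for n m
    proof -
      have A0: "0 \<le> A m" by (simp add: A_def)
      have "\<bar>F n m\<bar> \<le> e * \<bar>d n m\<bar> powr p + \<bar>C\<bar> * A m"
        using C[of "a m" "d n m"] mult_right_mono[OF abs_ge_self A0, of C] by (simp add: F_def A_def)
      then show "G n m \<le> (\<bar>C\<bar> + 1) * A m"
        using abs_triangle_ineq4[of "F n m" "A m"] A0 by (simp add: G_def algebra_simps)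
    qed (simp add: G_def)
    have "(\<lambda>n. G n m) \<longlonglongrightarrow> max 0 (\<bar>(\<bar>a m + 0\<bar> powr p - \<bar>0\<bar> powr p) - A m\<bar> - e * \<bar>0\<bar> powr p)" for m
      unfolding G_def F_def using p by (intro tendsto_intros tendsto_powr2 lim) auto
    then have "(\<lambda>n. \<Sum>m. G n m) \<longlonglongrightarrow> (\<Sum>m::nat. 0)"
      using tannerys_theorem[of "\<lambda>m n. G n m" "\<lambda>_. 0" sequentially "\<lambda>m. (\<bar>C\<bar> + 1) * A m"] G sA
      by (auto simp: A_def intro!: always_eventually summable_mult)
    then have "\<forall>\<^sub>F n in sequentially. (\<Sum>m. G n m) < r / 2"
      using r by (intro order_tendstoD(2)) auto
    then obtain n0 where n0: "\<And>n. n \<ge> n0 \<Longrightarrow> (\<Sum>m. G n m) < r / 2"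
      by (auto simp: eventually_sequentially)
    show "\<exists>n0. \<forall>n\<ge>n0. norm (suminf (F n) - suminf A) < r"
    proof (intro exI allI impI)
      fix n assume "n \<ge> n0"
      have sG: "summable (G n)"
        by (rule summable_comparison_test'[OF summable_mult[OF sA, of "\<bar>C\<bar> + 1"]]) (use G in auto)
      have sGd: "summable (\<lambda>m. G n m + e * \<bar>d n m\<bar> powr p)" by (intro summable_add sG summable_mult sd)
      have FA: "\<bar>F n m - A m\<bar> \<le> G n m + e * \<bar>d n m\<bar> powr p" for m by (simp add: G_def)
      have sFA: "summable (\<lambda>m. \<bar>F n m - A m\<bar>)"
        by (rule summable_comparison_test'[OF sGd]) (use FA in auto)
      have "\<bar>suminf (F n) - suminf A\<bar> \<le> (\<Sum>m. \<bar>F n m - A m\<bar>)"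
        using summable_rabs[OF sFA] suminf_diff[OF sF sA] by simp
      also have "\<dots> \<le> (\<Sum>m. G n m + e * \<bar>d n m\<bar> powr p)" by (rule suminf_le[OF FA sFA sGd])
      also have "\<dots> = (\<Sum>m. G n m) + e * (\<Sum>m. \<bar>d n m\<bar> powr p)"
        using suminf_add[OF sG summable_mult[OF sd]] suminf_mult[OF sd] by simp
      also have "\<dots> < r" using n0[OF \<open>n \<ge> n0\<close>] mult_left_mono[OF dB, of e n] e by linarith
      finally show "norm (suminf (F n) - suminf A) < r" by simp
    qed
  qed
  then show ?thesis using F_sum lpnorm_powr[OF a p] by (simp add: A_def)
qed

definition unit_seq :: "nat \<Rightarrow> nat \<Rightarrow> real" where
  "unit_seq j = (\<lambda>n. if n = j then 1 else 0)"

lemma lp_unit_seq: "unit_seq j \<in> lp p"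
proof -
  have "summable (\<lambda>n. \<bar>unit_seq j n\<bar> powr p)"
    by (rule summable_finite[of "{j}"]) (auto simp: unit_seq_def)
  then show ?thesis by (simp add: lp_def)
qed

lemma trunc_seq_Suc: "trunc_seq (Suc N) x = trunc_seq N x + fscale (x N) (unit_seq N)"
  by (auto simp: trunc_seq_def unit_seq_def fun_eq_iff less_Suc_eq)

context
  fixes p :: real and T :: "(nat \<Rightarrow> real) \<Rightarrow> (nat \<Rightarrow> real)"
  assumes T: "T \<in> Lop p"
begin

lemma Lop_apply_add: "x \<in> lp p \<Longrightarrow> y \<in> lp p \<Longrightarrow> T (x + y) = T x + T y"
  using T by (simp add: Lop_def)

lemma Lop_apply_fscale: "x \<in> lp p \<Longrightarrow> T (fscale c x) = fscale c (T x)"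
  using T by (simp add: Lop_def)

lemma Lop_apply_in_lp: "x \<in> lp p \<Longrightarrow> T x \<in> lp p"
  using T by (simp add: Lop_def)

lemma Lop_apply_outside: "x \<notin> lp p \<Longrightarrow> T x = 0"
  using T by (simp add: Lop_def)

lemma Lop_apply_zero: "T 0 = 0"
  using Lop_apply_fscale[of 0 0] by simp

lemma Lop_apply_uminus: "x \<in> lp p \<Longrightarrow> T (- x) = - T x"
  using Lop_apply_fscale[of x "-1"] by (simp add: fscale_minus_one)

lemma Lop_apply_diff: "x \<in> lp p \<Longrightarrow> y \<in> lp p \<Longrightarrow> T (x - y) = T x - T y"
  using Lop_apply_add[of x "- y"] Lop_apply_uminus[of y] lp_uminus[of y p] by simp

lemma bdd_above_Lop_image: "bdd_above ((\<lambda>x. lpnorm p (T x)) ` {x \<in> lp p. lpnorm p x \<le> 1})"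
proof -
  obtain C where C: "\<And>x. x \<in> lp p \<Longrightarrow> lpnorm p (T x) \<le> C * lpnorm p x"
    using T unfolding Lop_def by blast
  have "lpnorm p (T x) \<le> max C 0" if "x \<in> lp p" "lpnorm p x \<le> 1" for x
  proof -
    have "C * lpnorm p x \<le> max C 0 * lpnorm p x"
      using lpnorm_nonneg[of p x] by (intro mult_right_mono) auto
    also have "\<dots> \<le> max C 0" using that by (simp add: mult_left_le)
    finally show ?thesis using C[OF that(1)] by simp
  qed
  then show ?thesis by (auto intro!: bdd_aboveI)
qed

lemma lpnorm_apply_le_opnorm: "x \<in> lp p \<Longrightarrow> lpnorm p x \<le> 1 \<Longrightarrow> lpnorm p (T x) \<le> opnorm p T"
  unfolding opnorm_def by (rule cSup_upper[OF _ bdd_above_Lop_image]) auto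

lemma opnorm_nonneg: "0 \<le> opnorm p T"
  using lpnorm_apply_le_opnorm[of 0] lpnorm_nonneg[of p "T 0"] by simp

lemma less_opnorm_witness:
  assumes "c < opnorm p T"
  obtains x where "x \<in> lp p" "lpnorm p x \<le> 1" "c < lpnorm p (T x)"
proof -
  have "{x \<in> lp p. lpnorm p x \<le> 1} \<noteq> {}" using lp_zero[of p] lpnorm_zero[of p] by fastforce
  then show ?thesis
    using assms that less_cSup_iff[OF _ bdd_above_Lop_image, of c] unfolding opnorm_def by auto
qed

lemma lpnorm_apply_le:
  assumes p: "p > 0" and x: "x \<in> lp p" shows "lpnorm p (T x) \<le> opnorm p T * lpnorm p x"
proof (cases "lpnorm p x = 0")
  case True
  then show ?thesis using lpnorm_eq_0D[OF x p] by (simp add: Lop_apply_zero)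
next
  case False
  define n where "n = lpnorm p x"
  have n: "n > 0" using False lpnorm_nonneg[of p x] by (simp add: n_def)
  have "lpnorm p (fscale (1/n) x) = 1" using lpnorm_fscale[OF x p, of "1/n"] n by (simp add: n_def)
  then have "lpnorm p (T (fscale (1/n) x)) \<le> opnorm p T"
    using lpnorm_apply_le_opnorm[OF lp_fscale[OF x]] by simp
  moreover have "lpnorm p (T (fscale (1/n) x)) = lpnorm p (T x) / n"
    using Lop_apply_fscale[OF x] lpnorm_fscale[OF Lop_apply_in_lp[OF x] p, of "1/n"] n by simp
  ultimately show ?thesis using n by (simp add: n_def field_simps)
qed

lemma abs_apply_le: "p > 0 \<Longrightarrow> x \<in> lp p \<Longrightarrow> \<bar>T x m\<bar> \<le> opnorm p T * lpnorm p x"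
  using abs_le_lpnorm[OF Lop_apply_in_lp] lpnorm_apply_le order_trans by blast

lemma Lop_apply_trunc_seq: "T (trunc_seq N x) m = (\<Sum>j<N. T (unit_seq j) m * x j)"
proof (induction N)
  case 0
  show ?case using Lop_apply_zero by (simp add: trunc_seq_def zero_fun_def)
next
  case (Suc N)
  have "T (trunc_seq (Suc N) x) = T (trunc_seq N x) + fscale (x N) (T (unit_seq N))"
    unfolding trunc_seq_Suc
    by (simp add: Lop_apply_add[OF lp_trunc_seq lp_fscale[OF lp_unit_seq]] Lop_apply_fscale[OF lp_unit_seq])
  then show ?case using Suc by (simp add: mult.commute)
qed

end

lemma opnorm_least:
  assumes "\<And>x. x \<in> lp p \<Longrightarrow> lpnorm p x \<le> 1 \<Longrightarrow> lpnorm p (T x) \<le> c"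
  shows "opnorm p T \<le> c"
proof -
  have "{x \<in> lp p. lpnorm p x \<le> 1} \<noteq> {}" using lp_zero[of p] lpnorm_zero[of p] by fastforce
  then show ?thesis unfolding opnorm_def using assms by (intro cSUP_least) auto
qed

lemma Lop_add: assumes S: "S \<in> Lop p" and T: "T \<in> Lop p" and p: "1 < p" shows "S + T \<in> Lop p"
proof -
  have "lpnorm p ((S + T) x) \<le> (opnorm p S + opnorm p T) * lpnorm p x" if x: "x \<in> lp p" for x
  proof -
    have "lpnorm p ((S + T) x) \<le> lpnorm p (S x) + lpnorm p (T x)"
      using lpnorm_add_le[OF p Lop_apply_in_lp[OF S x] Lop_apply_in_lp[OF T x]] by simp
    also have "\<dots> \<le> opnorm p S * lpnorm p x + opnorm p T * lpnorm p x"
      using p by (intro add_mono lpnorm_apply_le[OF S _ x] lpnorm_apply_le[OF T _ x]) auto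
    finally show ?thesis by (simp add: algebra_simps)
  qed
  then have "\<exists>C. \<forall>x\<in>lp p. lpnorm p ((S + T) x) \<le> C * lpnorm p x" by blast
  then show ?thesis
    using Lop_apply_add[OF S] Lop_apply_add[OF T] Lop_apply_fscale[OF S] Lop_apply_fscale[OF T]
      Lop_apply_outside[OF S] Lop_apply_outside[OF T] lp_add[OF Lop_apply_in_lp[OF S] Lop_apply_in_lp[OF T]] p
    unfolding Lop_def by (auto simp: fscale_def fun_eq_iff algebra_simps)
qed

lemma Lop_fscale: assumes S: "S \<in> Lop p" and p: "p > 0" shows "(\<lambda>x. fscale c (S x)) \<in> Lop p"
proof -
  have "lpnorm p (fscale c (S x)) \<le> (\<bar>c\<bar> * opnorm p S) * lpnorm p x" if x: "x \<in> lp p" for x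
    using lpnorm_fscale[OF Lop_apply_in_lp[OF S x] p, of c] lpnorm_apply_le[OF S p x]
    by (simp add: mult.assoc mult_left_mono)
  then have "\<exists>C. \<forall>x\<in>lp p. lpnorm p (fscale c (S x)) \<le> C * lpnorm p x" by blast
  then show ?thesis
    using Lop_apply_add[OF S] Lop_apply_fscale[OF S] Lop_apply_outside[OF S] lp_fscale[OF Lop_apply_in_lp[OF S]]
    unfolding Lop_def by (auto simp: fscale_def fun_eq_iff algebra_simps)
qed

lemma Lop_diff: assumes S: "S \<in> Lop p" and T: "T \<in> Lop p" and p: "1 < p" shows "S - T \<in> Lop p"
proof -
  have "S - T = S + (\<lambda>x. fscale (-1) (T x))" by (simp add: fun_eq_iff)
  then show ?thesis using p by (simp only:) (intro Lop_add[OF S Lop_fscale[OF T]], auto)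
qed

lemma Lop_zero: "0 \<in> Lop p"
proof -
  have "\<exists>C. \<forall>x\<in>lp p. lpnorm p ((0 :: (nat \<Rightarrow> real) \<Rightarrow> (nat \<Rightarrow> real)) x) \<le> C * lpnorm p x"
    by (rule exI[of _ 0]) simp
  moreover have "fscale c (0 :: nat \<Rightarrow> real) = 0" for c by (simp add: fun_eq_iff)
  ultimately show ?thesis by (simp add: Lop_def)
qed

lemma opnorm_fscale_le: assumes S: "S \<in> Lop p" and p: "p > 0"
  shows "opnorm p (\<lambda>x. fscale c (S x)) \<le> \<bar>c\<bar> * opnorm p S"
proof (rule opnorm_least)
  fix x assume x: "x \<in> lp p" "lpnorm p x \<le> 1"
  show "lpnorm p (fscale c (S x)) \<le> \<bar>c\<bar> * opnorm p S"
    using lpnorm_fscale[OF Lop_apply_in_lp[OF S x(1)] p, of c] lpnorm_apply_le_opnorm[OF S x]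
    by (simp add: mult_left_mono)
qed

lemma Lop_coordinate_in_lp:
  assumes T: "T \<in> Lop p" and pq: "conjugate_exponents p q"
  shows "(\<lambda>j. T (unit_seq j) m) \<in> lp q"
proof -
  have p: "0 < p" and q: "0 < q" using conjugate_exponentsD[OF pq] by auto
  define c where "c j = T (unit_seq j) m" for j
  \<comment> \<open>evaluate the m-th coordinate of T at the norming vectors of the truncations of c\<close>
  have "(\<Sum>j<N. \<bar>c j\<bar> powr q) \<le> opnorm p T powr q" for N
  proof (cases "trunc_seq N c = 0")
    case True
    have "c j = 0" if "j < N" for j
      using that fun_cong[OF True, of j] by (simp add: trunc_seq_def)
    then show ?thesis by simp
  next
    case False
    define J where "J = duality_map q (trunc_seq N c)"
    note J = duality_map_norming[OF conjugate_exponents_sym[OF pq] lp_trunc_seq False, folded J_def]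
    have "trunc_seq N J = J" by (auto simp: J_def duality_map_def trunc_seq_def fun_eq_iff)
    then have "T J m = lp_pair J (trunc_seq N c)"
      using Lop_apply_trunc_seq[OF T, of N J m] by (simp add: lp_pair_trunc_seq c_def mult.commute)
    then have "lpnorm q (trunc_seq N c) \<le> opnorm p T"
      using J(2,3) abs_apply_le[OF T p J(1), of m] by simp
    then have "(lpnorm q (trunc_seq N c)) powr q \<le> opnorm p T powr q"
      using q lpnorm_nonneg by (intro powr_mono2) auto
    then show ?thesis using q by (simp add: lpnorm_trunc_seq powr_powr sum_nonneg)
  qed
  then have "summable (\<lambda>j. \<bar>c j\<bar> powr q)" by (intro summableI_nonneg_bounded) auto
  then show ?thesis by (simp add: lp_def c_def)
qed

lemma Lop_apply_eq_lp_pair: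
  assumes T: "T \<in> Lop p" and pq: "conjugate_exponents p q" and x: "x \<in> lp p"
  shows "T x m = lp_pair (\<lambda>j. T (unit_seq j) m) x"
proof -
  have p: "p > 0" using conjugate_exponentsD[OF pq] by simp
  have "(\<lambda>N. T (tail_seq N x) m) \<longlonglongrightarrow> 0"
  proof (rule Lim_null_comparison)
    show "\<forall>\<^sub>F N in sequentially. norm (T (tail_seq N x) m) \<le> opnorm p T * lpnorm p (tail_seq N x)"
      using abs_apply_le[OF T p lp_tail_seq[OF x]] by simp
    show "(\<lambda>N. opnorm p T * lpnorm p (tail_seq N x)) \<longlonglongrightarrow> 0"
      using tendsto_mult_right_zero[OF lpnorm_tail_seq_tendsto_0[OF x p]] by simp
  qed
  moreover have "T (trunc_seq N x) m = T x m - T (tail_seq N x) m" for N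
    using Lop_apply_add[OF T lp_trunc_seq[of N x] lp_tail_seq[OF x, of N]] by (simp add: trunc_seq_add_tail_seq)
  ultimately have "(\<lambda>N. T (trunc_seq N x) m) \<longlonglongrightarrow> T x m - 0"
    by (simp only:) (intro tendsto_diff tendsto_const)
  moreover have "(\<lambda>N. T (trunc_seq N x) m) \<longlonglongrightarrow> lp_pair (\<lambda>j. T (unit_seq j) m) x"
    unfolding Lop_apply_trunc_seq[OF T] lp_pair_def
    by (rule summable_LIMSEQ[OF summable_rabs_cancel])
      (rule summable_abs_lp_pair[OF pq x Lop_coordinate_in_lp[OF T pq]])
  ultimately show ?thesis using LIMSEQ_unique by fastforce
qed

lemma Lop_apply_tendsto_coordinatewise:
  assumes T: "T \<in> Lop p" and p: "1 < p" and d: "\<And>n. d n \<in> lp p" "\<And>n. lpnorm p (d n) \<le> B"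
    and z: "z \<in> lp p" and lim: "\<And>m. (\<lambda>n. d n m) \<longlonglongrightarrow> z m"
  shows "(\<lambda>n. T (d n) m) \<longlonglongrightarrow> T z m"
proof -
  note pq = conjugate_exponents_divide[OF p]
  have "(\<lambda>n. lp_pair (d n) (\<lambda>j. T (unit_seq j) m)) \<longlonglongrightarrow> lp_pair z (\<lambda>j. T (unit_seq j) m)"
    by (rule lp_pair_tendsto_coordinatewise[OF conjugate_exponents_sym[OF pq]
          Lop_coordinate_in_lp[OF T pq] d z lim])
  then show ?thesis using Lop_apply_eq_lp_pair[OF T pq] d(1) z by (simp add: lp_pair_commute)
qed

lemma Kop_subset_Lop: "Kop p \<subseteq> Lop p"
  unfolding Kop_def by blast

lemma KopD:
  fixes s :: "nat \<Rightarrow> nat \<Rightarrow> real"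
  assumes "K \<in> Kop p" "\<And>n. s n \<in> lp p" "\<And>n. lpnorm p (s n) \<le> 1"
  obtains r y where "strict_mono r" "y \<in> lp p" "(\<lambda>n. lpnorm p (K (s (r n)) - y)) \<longlonglongrightarrow> 0"
  using assms unfolding Kop_def by blast

lemma Kop_bounded_subseq:
  fixes d :: "nat \<Rightarrow> nat \<Rightarrow> real"
  assumes K: "K \<in> Kop p" and p: "p > 0" and d: "\<And>n. d n \<in> lp p" "\<And>n. lpnorm p (d n) \<le> B"
  obtains r y where "strict_mono r" "y \<in> lp p" "(\<lambda>n. lpnorm p (K (d (r n)) - y)) \<longlonglongrightarrow> 0"
proof -
  have KL: "K \<in> Lop p" using K Kop_subset_Lop by blast
  define b where "b = max B 1"
  have b: "b > 0" "B \<le> b" by (auto simp: b_def)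
  define s where "s n = fscale (1/b) (d n)" for n
  have s: "s n \<in> lp p" "lpnorm p (s n) \<le> 1" for n
    using lp_fscale[OF d(1)] lpnorm_fscale[OF d(1) p, of "1/b" n] d(2)[of n] b
    by (simp_all add: s_def divide_le_eq_1)
  obtain r y where r: "strict_mono r" and y: "y \<in> lp p"
    and ly: "(\<lambda>n. lpnorm p (K (s (r n)) - y)) \<longlonglongrightarrow> 0"
    by (rule KopD[OF K s(1) s(2)])
  have "K (d n) - fscale b y = fscale b (K (s n) - y)" for n
  proof -
    have "d n = fscale b (s n)" using b by (simp add: s_def fun_eq_iff)
    then have "K (d n) = fscale b (K (s n))" by (simp only: Lop_apply_fscale[OF KL s(1)])
    then show ?thesis by (simp add: fun_eq_iff right_diff_distrib)
  qed
  then have "lpnorm p (K (d (r n)) - fscale b y) = b * lpnorm p (K (s (r n)) - y)" for n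
    using lpnorm_fscale[OF lp_diff[OF Lop_apply_in_lp[OF KL s(1)] y p] p, of b "r n"] b by simp
  then have "(\<lambda>n. lpnorm p (K (d (r n)) - fscale b y)) \<longlonglongrightarrow> 0"
    using tendsto_mult_right_zero[OF ly, of b] by simp
  then show ?thesis by (rule that[OF r lp_fscale[OF y]])
qed

lemma Kop_subseq_tendsto_0:
  assumes K: "K \<in> Kop p" and p: "1 < p" and d: "\<And>n. d n \<in> lp p" "\<And>n. lpnorm p (d n) \<le> B"
    and lim: "\<And>m. (\<lambda>n. d n m) \<longlonglongrightarrow> 0"
  obtains r where "strict_mono r" "(\<lambda>n. lpnorm p (K (d (r n)))) \<longlonglongrightarrow> 0"
proof -
  have p0: "p > 0" using p by simp
  have KL: "K \<in> Lop p" using K Kop_subset_Lop by blast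
  obtain r y where r: "strict_mono r" and y: "y \<in> lp p"
    and ly: "(\<lambda>n. lpnorm p (K (d (r n)) - y)) \<longlonglongrightarrow> 0"
    by (rule Kop_bounded_subseq[OF K p0 d(1) d(2)])
  \<comment> \<open>the norm limit y must agree with the coordinatewise limit K 0 = 0\<close>
  have "y = 0"
  proof
    fix m
    have dr: "d (r n) \<in> lp p" "lpnorm p (d (r n)) \<le> B" for n using d by simp_all
    have "(\<lambda>n. d (r n) m') \<longlonglongrightarrow> 0 m'" for m'
      using LIMSEQ_subseq_LIMSEQ[OF lim r] by (simp add: o_def)
    then have "(\<lambda>n. K (d (r n)) m) \<longlonglongrightarrow> K 0 m"
      by (rule Lop_apply_tendsto_coordinatewise[OF KL p dr lp_zero])
    moreover have "(\<lambda>n. K (d (r n)) m) \<longlonglongrightarrow> y m"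
      by (rule tendsto_coordinate_of_lpnorm[OF p0 _ y ly]) (rule Lop_apply_in_lp[OF KL dr(1)])
    ultimately have "y m = K 0 m" using LIMSEQ_unique by blast
    then show "y m = 0 m" by (simp add: Lop_apply_zero[OF KL])
  qed
  then show ?thesis using that[OF r] ly by simp
qed

lemma Kop_zero: "0 \<in> Kop p"
proof -
  have "\<exists>(r::nat \<Rightarrow> nat) y. strict_mono r \<and> y \<in> lp p \<and>
          (\<lambda>n. lpnorm p ((0 :: (nat \<Rightarrow> real) \<Rightarrow> (nat \<Rightarrow> real)) (s (r n)) - y)) \<longlonglongrightarrow> 0"
    for s :: "nat \<Rightarrow> nat \<Rightarrow> real"
    by (rule exI[of _ id], rule exI[of _ 0]) (simp add: strict_mono_id)
  then show ?thesis unfolding Kop_def using Lop_zero by blast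
qed

lemma dist_Kop_less_witness:
  assumes "dist_Kop p T < c"
  obtains K where "K \<in> Kop p" "opnorm p (T - K) < c"
proof -
  have "(\<lambda>K. opnorm p (T - K)) ` Kop p \<noteq> {}" using Kop_zero by blast
  from cInf_lessD[OF this] assms that show ?thesis unfolding dist_Kop_def by blast
qed

lemma unit_ball_subseq_decomposition:
  fixes Z :: "nat \<Rightarrow> nat \<Rightarrow> real"
  assumes p: "1 < p" and K: "K \<in> Kop p" and Z: "\<And>n. Z n \<in> lp p" "\<And>n. lpnorm p (Z n) \<le> 1"
  obtains r z D \<delta> where "strict_mono r" "z \<in> lp p" "lpnorm p z \<le> 1"
    "\<And>n. Z (r n) = z + D n" "\<And>n. D n \<in> lp p" "\<And>n. lpnorm p (D n) \<le> 2"
    "\<And>m. (\<lambda>n. D n m) \<longlonglongrightarrow> 0" "(\<lambda>n. lpnorm p (D n)) \<longlonglongrightarrow> \<delta>"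
    "(\<lambda>n. lpnorm p (K (D n))) \<longlonglongrightarrow> 0"
proof -
  have p0: "p > 0" using p by simp
  obtain r1 z where r1: "strict_mono r1" and z: "z \<in> lp p" "lpnorm p z \<le> 1"
    and cz: "\<And>m. (\<lambda>n. Z (r1 n) m) \<longlonglongrightarrow> z m"
    by (fact lp_unit_ball_coordinatewise_subseq[where s = Z, OF p0 Z(1) Z(2)])
  define d where "d n = Z (r1 n) - z" for n
  have d: "d n \<in> lp p" "lpnorm p (d n) \<le> 2" for n
  proof -
    show "d n \<in> lp p" unfolding d_def by (rule lp_diff[OF Z(1) z(1) p0])
    have "lpnorm p (d n) \<le> lpnorm p (Z (r1 n)) + lpnorm p (- z)"
      unfolding d_def using lpnorm_add_le[OF p Z(1)[of "r1 n"] lp_uminus[OF z(1)]] by simp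
    then show "lpnorm p (d n) \<le> 2" using Z(2)[of "r1 n"] z(2) by simp
  qed
  have d_lim: "(\<lambda>n. d n m) \<longlonglongrightarrow> 0" for m
    using tendsto_diff[OF cz[of m] tendsto_const[of "z m"]] by (simp add: d_def)
  obtain r2 where r2: "strict_mono r2" and lK: "(\<lambda>n. lpnorm p (K (d (r2 n)))) \<longlonglongrightarrow> 0"
    by (fact Kop_subseq_tendsto_0[OF K p d(1) d(2) d_lim])
  obtain r3 where r3: "strict_mono r3" and mono: "monoseq (\<lambda>n. lpnorm p (d (r2 (r3 n))))"
    by (rule seq_monosub[THEN exE]) (auto simp: o_def)
  have "Bseq (\<lambda>n. lpnorm p (d (r2 (r3 n))))"
    using d(2) by (intro BseqI'[of _ 2]) (simp add: lpnorm_nonneg)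
  then obtain \<delta> where \<delta>: "(\<lambda>n. lpnorm p (d (r2 (r3 n)))) \<longlonglongrightarrow> \<delta>"
    using Bseq_monoseq_convergent[OF _ mono] by (auto simp: convergent_def)
  have r: "strict_mono (r1 \<circ> r2 \<circ> r3)" by (intro strict_mono_o r1 r2 r3)
  have eq: "Z ((r1 \<circ> r2 \<circ> r3) n) = z + d (r2 (r3 n))" for n by (simp add: d_def)
  have dr: "(\<lambda>n. d (r2 (r3 n)) m) \<longlonglongrightarrow> 0" for m
    using LIMSEQ_subseq_LIMSEQ[OF d_lim strict_mono_o[OF r2 r3]] by (simp add: o_def)
  have Kdr: "(\<lambda>n. lpnorm p (K (d (r2 (r3 n))))) \<longlonglongrightarrow> 0"
    using LIMSEQ_subseq_LIMSEQ[OF lK r3] by (simp add: o_def)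
  show ?thesis by (rule that[OF r z eq d dr \<delta> Kdr])
qed

lemma brezis_lieb_Lop:
  fixes D :: "nat \<Rightarrow> nat \<Rightarrow> real"
  assumes T: "T \<in> Lop p" and p: "1 < p" and z: "z \<in> lp p"
    and D: "\<And>n. D n \<in> lp p" "\<And>n. lpnorm p (D n) \<le> B" and lim: "\<And>m. (\<lambda>n. D n m) \<longlonglongrightarrow> 0"
  shows "(\<lambda>n. lpnorm p (T (z + D n)) powr p - lpnorm p (T (D n)) powr p) \<longlonglongrightarrow> lpnorm p (T z) powr p"
proof -
  have p0: "p > 0" using p by simp
  have TD: "T (D n) \<in> lp p" "lpnorm p (T (D n)) \<le> opnorm p T * B" for n
  proof -
    show "T (D n) \<in> lp p" by (rule Lop_apply_in_lp[OF T D(1)])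
    have "opnorm p T * lpnorm p (D n) \<le> opnorm p T * B"
      by (rule mult_left_mono[OF D(2) opnorm_nonneg[OF T]])
    then show "lpnorm p (T (D n)) \<le> opnorm p T * B"
      using lpnorm_apply_le[OF T p0 D(1), of n] by linarith
  qed
  have "(\<lambda>n. T (D n) m) \<longlonglongrightarrow> T 0 m" for m
    by (rule Lop_apply_tendsto_coordinatewise[OF T p D(1) D(2) lp_zero]) (simp add: lim)
  then have "(\<lambda>n. T (D n) m) \<longlonglongrightarrow> 0" for m by (simp add: Lop_apply_zero[OF T])
  from brezis_lieb[OF p0 Lop_apply_in_lp[OF T z] TD(1) TD(2) this] show ?thesis
    by (simp add: Lop_apply_add[OF T z D(1)])
qed

lemma powr_contraction_squeeze:
  fixes a t \<delta> \<alpha> p :: real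
  assumes p: "p > 0" and t: "0 \<le> t" "t \<le> a" and \<delta>: "0 \<le> \<delta>" and a: "a powr p + \<delta> powr p \<le> 1"
    and \<alpha>: "0 \<le> \<alpha>" "\<alpha> < 1" and le: "1 - t powr p \<le> (\<alpha> * \<delta>) powr p"
  shows "t = 1" "\<delta> = 0"
proof -
  have ta: "t powr p \<le> a powr p" using t p by (intro powr_mono2) auto
  have \<alpha>p: "\<alpha> powr p < 1" using powr_less_mono2[OF p \<alpha>] by simp
  define X where "X = 1 - t powr p"
  \<comment> \<open>1 - t^p \<le> \<alpha>^p \<delta>^p \<le> \<alpha>^p (1 - a^p) \<le> \<alpha>^p (1 - t^p)\<close>
  have "X \<le> \<alpha> powr p * \<delta> powr p" using le \<alpha>(1) \<delta> by (simp add: X_def powr_mult)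
  also have "\<dots> \<le> \<alpha> powr p * X" using a ta by (intro mult_left_mono) (auto simp: X_def)
  finally have "X * (1 - \<alpha> powr p) \<le> 0" by (simp add: algebra_simps)
  moreover have "0 \<le> \<delta> powr p" by simp
  then have "0 \<le> X" using a ta unfolding X_def by linarith
  ultimately have X: "X = 0" using \<alpha>p by (simp add: mult_le_0_iff)
  then have "(t powr p) powr (1/p) = 1" by (simp add: X_def)
  then show "t = 1" using t(1) p by (simp add: powr_powr)
  have "\<delta> powr p \<le> 0" using a ta X unfolding X_def by linarith
  then show "\<delta> = 0" using \<delta> by simp
qed

lemma norming_seq_subseq_tendsto_MT:
  fixes Z :: "nat \<Rightarrow> nat \<Rightarrow> real"
  assumes T: "T \<in> Lop p" and p: "1 < p" and nT: "opnorm p T = 1" and dK: "dist_Kop p T < 1"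
    and Z: "\<And>n. Z n \<in> lp p" "\<And>n. lpnorm p (Z n) \<le> 1"
    and lT: "(\<lambda>n. lpnorm p (T (Z n))) \<longlonglongrightarrow> 1"
  obtains r z where "strict_mono r" "z \<in> MT p T" "(\<lambda>n. lpnorm p (Z (r n) - z)) \<longlonglongrightarrow> 0"
proof -
  have p0: "p > 0" using p by simp
  obtain K where K: "K \<in> Kop p" and TK: "opnorm p (T - K) < 1"
    by (fact dist_Kop_less_witness[OF dK])
  have KL: "K \<in> Lop p" using K Kop_subset_Lop by blast
  define \<alpha> where "\<alpha> = opnorm p (T - K)"
  have \<alpha>: "0 \<le> \<alpha>" "\<alpha> < 1" using TK opnorm_nonneg[OF Lop_diff[OF T KL p]] by (simp_all add: \<alpha>_def)
  obtain r z D \<delta> where r: "strict_mono r" and z: "z \<in> lp p" "lpnorm p z \<le> 1"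
    and ZD: "\<And>n. Z (r n) = z + D n" and D: "\<And>n. D n \<in> lp p" "\<And>n. lpnorm p (D n) \<le> 2"
    and D0: "\<And>m. (\<lambda>n. D n m) \<longlonglongrightarrow> 0" and D\<delta>: "(\<lambda>n. lpnorm p (D n)) \<longlonglongrightarrow> \<delta>"
    and KD: "(\<lambda>n. lpnorm p (K (D n))) \<longlonglongrightarrow> 0"
    by (fact unit_ball_subseq_decomposition[where Z = Z, OF p K Z(1) Z(2)])
  have \<delta>: "0 \<le> \<delta>" by (rule LIMSEQ_le_const[OF D\<delta>]) (simp add: lpnorm_nonneg)
  have Zp: "(\<lambda>n. lpnorm p (Z (r n)) powr p) \<longlonglongrightarrow> lpnorm p z powr p + \<delta> powr p"
    using tendsto_add[OF brezis_lieb[OF p0 z(1) D D0] tendsto_powr2[OF D\<delta> tendsto_const, of p]] p0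
    by (simp add: ZD lpnorm_nonneg)
  have "lpnorm p (Z (r n)) powr p \<le> 1" for n
    using Z(2)[of "r n"] p0 powr_mono2[of p _ 1] by (simp add: lpnorm_nonneg)
  then have z\<delta>: "lpnorm p z powr p + \<delta> powr p \<le> 1" by (intro LIMSEQ_le_const2[OF Zp]) auto
  have TZp: "(\<lambda>n. lpnorm p (T (Z (r n))) powr p) \<longlonglongrightarrow> 1 powr p"
    using LIMSEQ_subseq_LIMSEQ[OF lT r] p0 by (intro tendsto_powr2) (auto simp: o_def lpnorm_nonneg)
  have "(\<lambda>n. lpnorm p (T (D n)) powr p) \<longlonglongrightarrow> 1 - lpnorm p (T z) powr p"
    using tendsto_diff[OF TZp brezis_lieb_Lop[OF T p z(1) D D0]] by (simp add: ZD)
  moreover have "(\<lambda>n. (lpnorm p (K (D n)) + \<alpha> * lpnorm p (D n)) powr p) \<longlonglongrightarrow> (0 + \<alpha> * \<delta>) powr p"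
    using p0 \<alpha> by (intro tendsto_powr2 tendsto_add tendsto_mult KD D\<delta> tendsto_const)
      (auto simp: lpnorm_nonneg)
  moreover have "lpnorm p (T (D n)) powr p \<le> (lpnorm p (K (D n)) + \<alpha> * lpnorm p (D n)) powr p" for n
  proof -
    have "T (D n) = K (D n) + (T - K) (D n)" by simp
    then have "lpnorm p (T (D n)) \<le> lpnorm p (K (D n)) + lpnorm p ((T - K) (D n))"
      using lpnorm_add_le[OF p Lop_apply_in_lp[OF KL D(1)[of n]] Lop_apply_in_lp[OF Lop_diff[OF T KL p] D(1)[of n]]]
      by simp
    also have "\<dots> \<le> lpnorm p (K (D n)) + \<alpha> * lpnorm p (D n)"
      using lpnorm_apply_le[OF Lop_diff[OF T KL p] p0 D(1)] by (simp add: \<alpha>_def)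
    finally show ?thesis using p0 by (intro powr_mono2) (auto simp: lpnorm_nonneg)
  qed
  ultimately have "1 - lpnorm p (T z) powr p \<le> (\<alpha> * \<delta>) powr p"
    by (intro LIMSEQ_le) auto
  moreover have "lpnorm p (T z) \<le> lpnorm p z" using lpnorm_apply_le[OF T p0 z(1)] nT by simp
  ultimately have Tz: "lpnorm p (T z) = 1" and "\<delta> = 0"
    using powr_contraction_squeeze[OF p0 lpnorm_nonneg _ \<delta> z\<delta> \<alpha>] by blast+
  then have "z \<in> MT p T" using z \<open>lpnorm p (T z) \<le> lpnorm p z\<close> nT by (simp add: MT_def)
  moreover have "(\<lambda>n. lpnorm p (Z (r n) - z)) \<longlonglongrightarrow> 0" using D\<delta> \<open>\<delta> = 0\<close> by (simp add: ZD)
  ultimately show ?thesis by (rule that[OF r])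
qed

lemma sgn_powr_tendsto:
  fixes t :: "nat \<Rightarrow> real"
  assumes p: "1 < p" and lim: "t \<longlonglongrightarrow> L"
  shows "(\<lambda>n. sgn (t n) * \<bar>t n\<bar> powr (p - 1)) \<longlonglongrightarrow> sgn L * \<bar>L\<bar> powr (p - 1)"
proof (cases "L = 0")
  case False
  have "isCont sgn L" using isCont_sgn[where f="\<lambda>x. x" and a=L] False by simp
  then have "(\<lambda>n. sgn (t n)) \<longlonglongrightarrow> sgn L" using isCont_tendsto_compose lim by blast
  moreover have "(\<lambda>n. \<bar>t n\<bar> powr (p - 1)) \<longlonglongrightarrow> \<bar>L\<bar> powr (p - 1)"
    using False by (intro tendsto_powr tendsto_rabs lim tendsto_const) auto
  ultimately show ?thesis by (rule tendsto_mult)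
next
  case True
  have "(\<lambda>n. \<bar>t n\<bar> powr (p - 1)) \<longlonglongrightarrow> 0"
    using lim True p by (intro tendsto_zero_powrI[where b="p - 1"]) (auto simp: tendsto_rabs_zero)
  moreover have "\<bar>sgn (t n) * \<bar>t n\<bar> powr (p - 1)\<bar> = \<bar>t n\<bar> powr (p - 1)" for n
    by (cases "t n = 0") (auto simp: abs_mult abs_sgn_eq)
  ultimately show ?thesis using True by (simp add: tendsto_rabs_zero_cancel)
qed

lemma duality_map_tendsto_coordinatewise:
  assumes p: "1 < p" and u: "\<And>n. u n \<in> lp p" "u0 \<in> lp p" "u0 \<noteq> 0"
    and lim: "(\<lambda>n. lpnorm p (u n - u0)) \<longlonglongrightarrow> 0"
  shows "(\<lambda>n. duality_map p (u n) m) \<longlonglongrightarrow> duality_map p u0 m"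
proof -
  have p0: "p > 0" using p by simp
  have "lpnorm p u0 \<noteq> 0" using lpnorm_eq_0D[OF u(2) p0] u(3) by auto
  moreover have "(\<lambda>n. u n m) \<longlonglongrightarrow> u0 m" by (rule tendsto_coordinate_of_lpnorm[OF p0 u(1) u(2) lim])
  moreover have "(\<lambda>n. lpnorm p (u n)) \<longlonglongrightarrow> lpnorm p u0" by (rule lpnorm_tendsto[OF p u(1) u(2) lim])
  ultimately show ?thesis
    unfolding duality_map_def by (intro tendsto_divide sgn_powr_tendsto[OF p] tendsto_powr tendsto_const) auto
qed

context
  fixes p :: real and f :: "((nat \<Rightarrow> real) \<Rightarrow> (nat \<Rightarrow> real)) \<Rightarrow> real"
  assumes f: "f \<in> Ldual p"
begin

lemma Ldual_add: "S \<in> Lop p \<Longrightarrow> T \<in> Lop p \<Longrightarrow> f (S + T) = f S + f T"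
  using f by (simp add: Ldual_def)

lemma Ldual_fscale: "S \<in> Lop p \<Longrightarrow> f (\<lambda>x. fscale c (S x)) = c * f S"
  using f by (simp add: Ldual_def)

lemma bdd_above_Ldual_image: "bdd_above ((\<lambda>S. \<bar>f S\<bar>) ` {S \<in> Lop p. opnorm p S \<le> 1})"
proof -
  obtain C where C: "\<And>S. S \<in> Lop p \<Longrightarrow> \<bar>f S\<bar> \<le> C * opnorm p S"
    using f unfolding Ldual_def by blast
  have "\<bar>f S\<bar> \<le> max C 0" if "S \<in> Lop p" "opnorm p S \<le> 1" for S
  proof -
    have "C * opnorm p S \<le> max C 0 * opnorm p S"
      using opnorm_nonneg[OF that(1)] by (intro mult_right_mono) auto
    also have "\<dots> \<le> max C 0" using that(2) by (simp add: mult_left_le)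
    finally show ?thesis using C[OF that(1)] by simp
  qed
  then show ?thesis by (auto intro!: bdd_aboveI)
qed

lemma abs_le_dualnorm: "S \<in> Lop p \<Longrightarrow> opnorm p S \<le> 1 \<Longrightarrow> \<bar>f S\<bar> \<le> dualnorm p f"
  unfolding dualnorm_def by (rule cSup_upper[OF _ bdd_above_Ldual_image]) auto

lemma abs_le_dualnorm_mult:
  assumes p: "p > 0" and R: "R \<in> Lop p" shows "\<bar>f R\<bar> \<le> dualnorm p f * opnorm p R"
proof (cases "opnorm p R = 0")
  case True
  have "R = (\<lambda>x. fscale 0 (R x))"
  proof
    fix x show "R x = fscale 0 (R x)"
      using lpnorm_apply_le[OF R p, of x] lpnorm_nonneg[of p "R x"] True
        lpnorm_eq_0D[OF Lop_apply_in_lp[OF R] p] Lop_apply_outside[OF R]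
      by (cases "x \<in> lp p") auto
  qed
  then have "f R = 0" using Ldual_fscale[OF R, of 0] by simp
  then show ?thesis using True by simp
next
  case False
  define n where "n = opnorm p R"
  have n: "n > 0" using False opnorm_nonneg[OF R] by (simp add: n_def)
  have "opnorm p (\<lambda>x. fscale (1/n) (R x)) \<le> 1"
    using opnorm_fscale_le[OF R p, of "1/n"] n by (simp add: n_def)
  then have "\<bar>f (\<lambda>x. fscale (1/n) (R x))\<bar> \<le> dualnorm p f"
    using abs_le_dualnorm[OF Lop_fscale[OF R p]] by simp
  then show ?thesis using Ldual_fscale[OF R, of "1/n"] n by (simp add: abs_mult n_def field_simps)
qed

end

lemma lpnorm_apply_tendsto_of_perturbation:
  fixes Z :: "nat \<Rightarrow> nat \<Rightarrow> real"
  assumes T: "T \<in> Lop p" and S: "S \<in> Lop p" and p: "1 < p" and nT: "opnorm p T = 1"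
    and Z: "\<And>n. Z n \<in> lp p" "\<And>n. lpnorm p (Z n) \<le> 1"
    and \<tau>: "\<And>n. \<tau> n > 0" "\<tau> \<longlonglongrightarrow> 0" and e: "0 \<le> e"
    and big: "\<And>n. 1 + e * \<tau> n < lpnorm p (T (Z n) + fscale (\<tau> n) (S (Z n)))"
  shows "(\<lambda>n. lpnorm p (T (Z n))) \<longlonglongrightarrow> 1"
proof (rule real_tendsto_sandwich)
  have p0: "p > 0" using p by simp
  show "\<forall>\<^sub>F n in sequentially. 1 - \<tau> n * opnorm p S \<le> lpnorm p (T (Z n))"
  proof (intro always_eventually allI)
    fix n
    have "lpnorm p (S (Z n)) \<le> opnorm p S"
      using lpnorm_apply_le_opnorm[OF S Z(1) Z(2)] .
    then have "lpnorm p (fscale (\<tau> n) (S (Z n))) \<le> \<tau> n * opnorm p S"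
      using lpnorm_fscale[OF Lop_apply_in_lp[OF S Z(1)] p0, of "\<tau> n" n] \<tau>(1)[of n] by simp
    moreover have "lpnorm p (T (Z n) + fscale (\<tau> n) (S (Z n)))
        \<le> lpnorm p (T (Z n)) + lpnorm p (fscale (\<tau> n) (S (Z n)))"
      by (rule lpnorm_add_le[OF p Lop_apply_in_lp[OF T Z(1)] lp_fscale[OF Lop_apply_in_lp[OF S Z(1)]]])
    moreover have "0 \<le> e * \<tau> n" using e \<tau>(1)[of n] by simp
    ultimately show "1 - \<tau> n * opnorm p S \<le> lpnorm p (T (Z n))" using big[of n] by linarith
  qed
  show "\<forall>\<^sub>F n in sequentially. lpnorm p (T (Z n)) \<le> 1"
    using lpnorm_apply_le_opnorm[OF T Z(1) Z(2)] nT by simp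
  show "(\<lambda>n. 1 - \<tau> n * opnorm p S) \<longlonglongrightarrow> 1"
    using tendsto_diff[OF tendsto_const tendsto_mult_left_zero[OF \<tau>(2)], of 1 "opnorm p S"] by simp
qed (rule tendsto_const)

lemma duality_map_perturbation_pairing_gt:
  assumes T: "T \<in> Lop p" and S: "S \<in> Lop p" and p: "1 < p" and nT: "opnorm p T = 1"
    and z: "z \<in> lp p" "lpnorm p z \<le> 1" and \<tau>: "\<tau> > 0" and e: "0 \<le> e"
    and big: "1 + e * \<tau> < lpnorm p (T z + fscale \<tau> (S z))"
  shows "e < lp_pair (duality_map p (T z + fscale \<tau> (S z))) (S z)"
proof -
  note pq = conjugate_exponents_divide[OF p]
  define u where "u = T z + fscale \<tau> (S z)"
  define w where "w = duality_map p u"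
  have Tz: "T z \<in> lp p" and Sz: "S z \<in> lp p" using Lop_apply_in_lp[OF T z(1)] Lop_apply_in_lp[OF S z(1)] .
  have u: "u \<in> lp p" using p by (simp add: u_def lp_add[OF Tz lp_fscale[OF Sz]])
  have "0 \<le> e * \<tau>" using e \<tau> by simp
  then have "u \<noteq> 0" using big by (auto simp: u_def[symmetric])
  note W = duality_map_norming[OF pq u this, folded w_def]
  have "lp_pair w (T z) \<le> lpnorm (p / (p - 1)) w * lpnorm p (T z)"
    using abs_lp_pair_le[OF pq Tz W(1)] by simp
  also have "\<dots> \<le> 1" using W(2) lpnorm_apply_le_opnorm[OF T z] nT by simp
  finally have "lpnorm p u \<le> 1 + \<tau> * lp_pair w (S z)"
    using W(3) lp_pair_add_right[OF pq Tz lp_fscale[OF Sz] W(1)] lp_pair_fscale_right[OF pq Sz W(1)]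
    by (simp add: u_def)
  then have "\<tau> * e < \<tau> * lp_pair w (S z)" using big by (simp add: u_def mult.commute)
  then show ?thesis using \<tau> by (simp add: u_def w_def)
qed

lemma Jset_perturbation_witness:
  assumes T: "T \<in> Lop p" and p: "1 < p" and f: "f \<in> Jset p T" and S: "S \<in> Lop p"
    and \<tau>: "\<tau> > 0" and e: "e < f S"
  shows "\<exists>y. y \<in> lp p \<and> lpnorm p y \<le> 1 \<and> 1 + e * \<tau> < lpnorm p (T y + fscale \<tau> (S y))"
proof -
  have p0: "p > 0" using p by simp
  have fL: "f \<in> Ldual p" and f1: "dualnorm p f = 1" "f T = 1" using f by (auto simp: Jset_def)
  define R where "R = T + (\<lambda>x. fscale \<tau> (S x))"
  have R: "R \<in> Lop p" unfolding R_def by (rule Lop_add[OF T Lop_fscale[OF S p0] p])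
  have "1 + e * \<tau> < 1 + \<tau> * f S" using \<tau> e by (simp add: mult.commute)
  also have "1 + \<tau> * f S = f R"
    unfolding R_def using Ldual_add[OF fL T Lop_fscale[OF S p0]] Ldual_fscale[OF fL S] f1 by simp
  also have "\<dots> \<le> opnorm p R" using abs_le_dualnorm_mult[OF fL p0 R] f1 by simp
  finally obtain y where y: "y \<in> lp p" "lpnorm p y \<le> 1" and "1 + e * \<tau> < lpnorm p (R y)"
    by (rule less_opnorm_witness[OF R])
  then have "1 + e * \<tau> < lpnorm p (T y + fscale \<tau> (S y))" by (simp add: R_def)
  with y show ?thesis by blast
qed

lemma perturbation_tendsto:
  fixes Z :: "nat \<Rightarrow> nat \<Rightarrow> real"
  assumes T: "T \<in> Lop p" and S: "S \<in> Lop p" and p: "1 < p" and x: "x \<in> lp p"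
    and Z: "\<And>n. Z n \<in> lp p" "\<And>n. lpnorm p (Z n) \<le> 1" and lim: "(\<lambda>n. lpnorm p (Z n - x)) \<longlonglongrightarrow> 0"
    and \<tau>: "\<tau> \<longlonglongrightarrow> 0" "\<And>n. 0 \<le> \<tau> n"
  shows "(\<lambda>n. lpnorm p (T (Z n) + fscale (\<tau> n) (S (Z n)) - T x)) \<longlonglongrightarrow> 0"
proof -
  have p0: "p > 0" using p by simp
  have "lpnorm p (T (Z n) + fscale (\<tau> n) (S (Z n)) - T x)
      \<le> opnorm p T * lpnorm p (Z n - x) + \<tau> n * opnorm p S" for n
  proof -
    have eq: "T (Z n) + fscale (\<tau> n) (S (Z n)) - T x = T (Z n - x) + fscale (\<tau> n) (S (Z n))"
      using Lop_apply_diff[OF T Z(1) x] by (simp add: algebra_simps)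
    have "lpnorm p (T (Z n) + fscale (\<tau> n) (S (Z n)) - T x)
        \<le> lpnorm p (T (Z n - x)) + lpnorm p (fscale (\<tau> n) (S (Z n)))"
      unfolding eq by (rule lpnorm_add_le[OF p Lop_apply_in_lp[OF T lp_diff[OF Z(1)[of n] x p0]]
          lp_fscale[OF Lop_apply_in_lp[OF S Z(1)[of n]]]])
    moreover have "lpnorm p (fscale (\<tau> n) (S (Z n))) \<le> \<tau> n * opnorm p S"
      using lpnorm_fscale[OF Lop_apply_in_lp[OF S Z(1)[of n]] p0] lpnorm_apply_le_opnorm[OF S Z(1) Z(2), of n]
        \<tau>(2)[of n] by (simp add: mult_left_mono)
    ultimately show ?thesis using lpnorm_apply_le[OF T p0 lp_diff[OF Z(1)[of n] x p0]] by linarith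
  qed
  then have "\<forall>\<^sub>F n in sequentially. norm (lpnorm p (T (Z n) + fscale (\<tau> n) (S (Z n)) - T x))
      \<le> opnorm p T * lpnorm p (Z n - x) + \<tau> n * opnorm p S"
    by (intro always_eventually allI) (simp add: lpnorm_nonneg)
  then show ?thesis
    by (rule Lim_null_comparison)
      (rule tendsto_add_zero[OF tendsto_mult_right_zero[OF lim] tendsto_mult_left_zero[OF \<tau>(1)]])
qed

lemma MT_pairing_ge_of_perturbation:
  fixes Z :: "nat \<Rightarrow> nat \<Rightarrow> real"
  assumes T: "T \<in> Lop p" and S: "S \<in> Lop p" and p: "1 < p" and nT: "opnorm p T = 1"
    and x: "x \<in> MT p T" and Z: "\<And>n. Z n \<in> lp p" "\<And>n. lpnorm p (Z n) \<le> 1"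
    and lim: "(\<lambda>n. lpnorm p (Z n - x)) \<longlonglongrightarrow> 0"
    and \<tau>: "\<And>n. \<tau> n > 0" "\<tau> \<longlonglongrightarrow> 0" and e: "0 \<le> e"
    and big: "\<And>n. 1 + e * \<tau> n < lpnorm p (T (Z n) + fscale (\<tau> n) (S (Z n)))"
  shows "e \<le> lp_pair (duality_map p (T x)) (S x)"
proof -
  have p0: "p > 0" using p by simp
  note pq = conjugate_exponents_divide[OF p]
  have xl: "x \<in> lp p" and Tx: "lpnorm p (T x) = 1" using x nT by (auto simp: MT_def)
  define u where "u n = T (Z n) + fscale (\<tau> n) (S (Z n))" for n
  define w where "w n = duality_map p (u n)" for n
  have u: "u n \<in> lp p" for n
    unfolding u_def by (intro lp_add lp_fscale Lop_apply_in_lp[OF T] Lop_apply_in_lp[OF S] Z p0)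
  have "u n \<noteq> 0" for n
  proof -
    have "0 \<le> e * \<tau> n" using e \<tau>(1)[of n] by simp
    then show ?thesis using big[of n] by (auto simp: u_def[symmetric])
  qed
  then have w: "w n \<in> lp (p / (p - 1))" "lpnorm (p / (p - 1)) (w n) = 1" for n
    using duality_map_norming[OF pq u] by (simp_all add: w_def)
  have "(\<lambda>n. lpnorm p (u n - T x)) \<longlonglongrightarrow> 0"
    unfolding u_def using \<tau>(1) by (intro perturbation_tendsto[OF T S p xl Z lim \<tau>(2)]) (simp add: less_imp_le)
  then have "(\<lambda>n. w n m) \<longlonglongrightarrow> duality_map p (T x) m" for m
    unfolding w_def using Tx
    by (intro duality_map_tendsto_coordinatewise[OF p u Lop_apply_in_lp[OF T xl]]) auto
  moreover have "T x \<noteq> 0" using Tx by auto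
  ultimately have lim_Sx: "(\<lambda>n. lp_pair (w n) (S x)) \<longlonglongrightarrow> lp_pair (duality_map p (T x)) (S x)"
    using duality_map_norming(1)[OF pq Lop_apply_in_lp[OF T xl]]
    by (intro lp_pair_tendsto_coordinatewise[OF pq Lop_apply_in_lp[OF S xl] w(1) order_eq_refl[OF w(2)]])
      auto
  have wS: "\<bar>lp_pair (w n) (S (Z n)) - lp_pair (w n) (S x)\<bar> \<le> opnorm p S * lpnorm p (Z n - x)" for n
  proof -
    have "lp_pair (w n) (S (Z n)) - lp_pair (w n) (S x) = lp_pair (w n) (S (Z n - x))"
      using lp_pair_diff_right[OF pq Lop_apply_in_lp[OF S Z(1)] Lop_apply_in_lp[OF S xl] w(1)]
        Lop_apply_diff[OF S Z(1) xl] by simp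
    also have "\<bar>\<dots>\<bar> \<le> lpnorm p (S (Z n - x))"
      using abs_lp_pair_le[OF pq Lop_apply_in_lp[OF S lp_diff[OF Z(1) xl p0]] w(1)] w(2) by simp
    finally show ?thesis using lpnorm_apply_le[OF S p0 lp_diff[OF Z(1)[of n] xl p0]] by linarith
  qed
  have "\<forall>\<^sub>F n in sequentially.
      norm (lp_pair (w n) (S (Z n)) - lp_pair (w n) (S x)) \<le> opnorm p S * lpnorm p (Z n - x)"
    using wS by (intro always_eventually allI) simp
  then have "(\<lambda>n. lp_pair (w n) (S (Z n)) - lp_pair (w n) (S x)) \<longlonglongrightarrow> 0"
    by (rule Lim_null_comparison) (rule tendsto_mult_right_zero[OF lim])
  from tendsto_add[OF this lim_Sx] have "(\<lambda>n. lp_pair (w n) (S (Z n))) \<longlonglongrightarrow> lp_pair (duality_map p (T x)) (S x)"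
    by simp
  moreover have "e < lp_pair (w n) (S (Z n))" for n
    unfolding w_def u_def
    by (rule duality_map_perturbation_pairing_gt[OF T S p nT Z \<tau>(1) e big])
  ultimately show ?thesis by (intro LIMSEQ_le_const) (auto intro: less_imp_le)
qed

lemma Jset_apply_le_MT_pairing:
  assumes T: "T \<in> Lop p" and p: "1 < p" and nT: "opnorm p T = 1" and dK: "dist_Kop p T < 1"
    and f: "f \<in> Jset p T" and S: "S \<in> Lop p" and e: "0 \<le> e" "e < f S"
  shows "\<exists>x\<in>MT p T. e \<le> lp_pair (duality_map p (T x)) (S x)"
proof -
  define \<tau> where "\<tau> n = inverse (real (Suc n))" for n
  have \<tau>: "\<tau> n > 0" for n by (simp add: \<tau>_def)
  have \<tau>0: "\<tau> \<longlonglongrightarrow> 0" unfolding \<tau>_def by (rule LIMSEQ_inverse_real_of_nat)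
  have "\<exists>y. y \<in> lp p \<and> lpnorm p y \<le> 1 \<and> 1 + e * \<tau> n < lpnorm p (T y + fscale (\<tau> n) (S y))" for n
    by (rule Jset_perturbation_witness[OF T p f S \<tau>, where e = e, OF e(2)])
  then obtain Z where Z: "\<And>n. Z n \<in> lp p" "\<And>n. lpnorm p (Z n) \<le> 1"
    and big: "\<And>n. 1 + e * \<tau> n < lpnorm p (T (Z n) + fscale (\<tau> n) (S (Z n)))"
    by metis
  have lT: "(\<lambda>n. lpnorm p (T (Z n))) \<longlonglongrightarrow> 1"
    using T S p nT Z \<tau> \<tau>0 e(1) big by (rule lpnorm_apply_tendsto_of_perturbation)
  obtain r x where r: "strict_mono r" and x: "x \<in> MT p T"
    and lim: "(\<lambda>n. lpnorm p (Z (r n) - x)) \<longlonglongrightarrow> 0"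
    by (fact norming_seq_subseq_tendsto_MT[where Z = Z, OF T p nT dK Z(1) Z(2) lT])
  have \<tau>r: "\<tau> (r n) > 0" "(\<lambda>n. \<tau> (r n)) \<longlonglongrightarrow> 0" for n
    using \<tau> LIMSEQ_subseq_LIMSEQ[OF \<tau>0 r] by (simp_all add: o_def)
  have Zr: "Z (r n) \<in> lp p" "lpnorm p (Z (r n)) \<le> 1"
    and big_r: "1 + e * \<tau> (r n) < lpnorm p (T (Z (r n)) + fscale (\<tau> (r n)) (S (Z (r n))))" for n
    using Z big by simp_all
  have "e \<le> lp_pair (duality_map p (T x)) (S x)"
    by (rule MT_pairing_ge_of_perturbation[where Z = "\<lambda>n. Z (r n)" and \<tau> = "\<lambda>n. \<tau> (r n)",
          OF T S p nT x Zr lim \<tau>r e(1) big_r])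
  then show ?thesis using x by blast
qed

lemma Jset_apply_eq_0_of_MT_pairing:
  assumes T: "T \<in> Lop p" and p: "1 < p" and nT: "opnorm p T = 1" and dK: "dist_Kop p T < 1"
    and f: "f \<in> Jset p T" and S: "S \<in> Lop p"
    and MT_pairing: "\<And>z. z \<in> MT p T \<Longrightarrow> lp_pair (duality_map p (T z)) (S z) = 0"
  shows "f S = 0"
proof -
  have p0: "p > 0" using p by simp
  note pq = conjugate_exponents_divide[OF p]
  have fL: "f \<in> Ldual p" using f by (simp add: Jset_def)
  have le: "f R \<le> 0" if R: "R \<in> Lop p" and R0: "\<And>z. z \<in> MT p T \<Longrightarrow> lp_pair (duality_map p (T z)) (R z) = 0"
    for R
  proof (rule ccontr)
    assume "\<not> f R \<le> 0"
    then have e: "0 \<le> f R / 2" "f R / 2 < f R" by auto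
    have "\<exists>x\<in>MT p T. f R / 2 \<le> lp_pair (duality_map p (T x)) (R x)"
      by (rule Jset_apply_le_MT_pairing[OF T p nT dK f R, where e = "f R / 2", OF e])
    then obtain x where x: "x \<in> MT p T" and "f R / 2 \<le> lp_pair (duality_map p (T x)) (R x)"
      by blast
    then show False using R0[OF x] e by linarith
  qed
  have "lp_pair (duality_map p (T z)) (fscale (-1) (S z)) = 0" if z: "z \<in> MT p T" for z
  proof -
    have zl: "z \<in> lp p" and "T z \<noteq> 0" using z nT by (auto simp: MT_def)
    then have "duality_map p (T z) \<in> lp (p / (p - 1))"
      by (intro duality_map_norming(1)[OF pq Lop_apply_in_lp[OF T zl]])
    then show ?thesis
      using lp_pair_fscale_right[OF pq Lop_apply_in_lp[OF S zl], of _ "-1"] MT_pairing[OF z] by simp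
  qed
  then have "f (\<lambda>x. fscale (-1) (S x)) \<le> 0" by (intro le Lop_fscale[OF S p0])
  then show ?thesis using le[OF S MT_pairing] Ldual_fscale[OF fL S, of "-1"] by simp
qed

definition linear_on_Lop :: "real \<Rightarrow> (((nat \<Rightarrow> real) \<Rightarrow> (nat \<Rightarrow> real)) \<Rightarrow> real) \<Rightarrow> bool" where
  "linear_on_Lop p h \<longleftrightarrow> (\<forall>S\<in>Lop p. \<forall>T\<in>Lop p. h (S + T) = h S + h T)
      \<and> (\<forall>c. \<forall>S\<in>Lop p. h (\<lambda>x. fscale c (S x)) = c * h S) \<and> (\<forall>S. S \<notin> Lop p \<longrightarrow> h S = 0)"

lemma Ldual_imp_linear_on_Lop: "f \<in> Ldual p \<Longrightarrow> linear_on_Lop p f"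
  by (simp add: Ldual_def linear_on_Lop_def)

lemma linear_on_Lop_diff_scaled:
  "linear_on_Lop p a \<Longrightarrow> linear_on_Lop p h \<Longrightarrow> linear_on_Lop p (\<lambda>S. a S - c * h S)"
  by (simp add: linear_on_Lop_def algebra_simps)

lemma linear_on_Lop_apply_add_fscale:
  assumes a: "linear_on_Lop p a" and S: "S \<in> Lop p" and E: "E \<in> Lop p" and p: "p > 0"
  shows "a (S + (\<lambda>x. fscale c (E x))) = a S + c * a E"
  using a S E Lop_fscale[OF E p] by (simp add: linear_on_Lop_def)

lemma linear_on_Lop_in_span_of_kernel:
  fixes g :: "nat \<Rightarrow> ((nat \<Rightarrow> real) \<Rightarrow> (nat \<Rightarrow> real)) \<Rightarrow> real"
  assumes p: "1 < p" and g: "\<And>i. i < k \<Longrightarrow> linear_on_Lop p (g i)" and f: "linear_on_Lop p f"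
    and kernel: "\<And>S. S \<in> Lop p \<Longrightarrow> \<forall>i<k. g i S = 0 \<Longrightarrow> f S = 0"
  shows "f \<in> fscale.span (g ` {..<k})"
  using g f kernel
proof (induction k arbitrary: g f)
  case 0
  have "f = 0"
  proof
    fix S show "f S = 0 S"
      using "0.prems"(2) "0.prems"(3)[of S] by (cases "S \<in> Lop p") (auto simp: linear_on_Lop_def)
  qed
  then show ?case by (simp only: fscale.span_zero)
next
  case (Suc k)
  have p0: "p > 0" using p by simp
  have h: "linear_on_Lop p (g k)" using Suc.prems(1) by simp
  have span_g: "fscale.span (g ` {..<k}) \<subseteq> fscale.span (g ` {..<Suc k})"
    by (intro fscale.span_mono) auto
  have gk: "g k \<in> fscale.span (g ` {..<Suc k})" by (intro fscale.span_base) auto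
  show ?case
  proof (cases "\<exists>E\<in>Lop p. g k E \<noteq> 0")
    case False
    have "f \<in> fscale.span (g ` {..<k})"
      using Suc.prems False by (intro Suc.IH) (auto simp: less_Suc_eq)
    then show ?thesis using span_g by blast
  next
    case True
    then obtain E0 where E0: "E0 \<in> Lop p" "g k E0 \<noteq> 0" by blast
    define E where "E = (\<lambda>x. fscale (1 / g k E0) (E0 x))"
    have E: "E \<in> Lop p" "g k E = 1"
      using E0 h Lop_fscale[OF E0(1) p0] by (auto simp: E_def linear_on_Lop_def)
    \<comment> \<open>reduce to k functionals by projecting along E, on which g k is 1\<close>
    define proj where "proj a = (\<lambda>S. a S - a E * g k S)" for a :: "((nat \<Rightarrow> real) \<Rightarrow> (nat \<Rightarrow> real)) \<Rightarrow> real"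
    have proj_lin: "linear_on_Lop p (proj a)" if "linear_on_Lop p a" for a
      unfolding proj_def by (rule linear_on_Lop_diff_scaled[OF that h])
    have pf: "proj f \<in> fscale.span ((\<lambda>i. proj (g i)) ` {..<k})"
    proof (rule Suc.IH)
      fix S assume S: "S \<in> Lop p" and zero: "\<forall>i<k. proj (g i) S = 0"
      define S' where "S' = S + (\<lambda>x. fscale (- g k S) (E x))"
      have S': "S' \<in> Lop p" unfolding S'_def by (rule Lop_add[OF S Lop_fscale[OF E(1) p0] p])
      have eval: "a S' = proj a S" if "linear_on_Lop p a" for a
        unfolding S'_def proj_def by (subst linear_on_Lop_apply_add_fscale[OF that S E(1) p0]) simp
      have "\<forall>i<Suc k. g i S' = 0"
        using eval[OF h] E(2) eval[OF Suc.prems(1)] zero by (auto simp: proj_def less_Suc_eq)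
      then show "proj f S = 0" using Suc.prems(3)[OF S'] eval[OF Suc.prems(2)] by simp
    qed (use Suc.prems proj_lin in auto)
    have "proj (g i) \<in> fscale.span (g ` {..<Suc k})" if "i < k" for i
    proof -
      have "proj (g i) = g i - fscale (g i E) (g k)" by (simp add: proj_def fun_eq_iff)
      moreover have "g i \<in> fscale.span (g ` {..<Suc k})" using that by (intro fscale.span_base) auto
      ultimately show ?thesis using gk by (simp add: fscale.span_diff fscale.span_scale)
    qed
    then have "fscale.span ((\<lambda>i. proj (g i)) ` {..<k}) \<subseteq> fscale.span (g ` {..<Suc k})"
      by (intro fscale.span_minimal fscale.subspace_span) auto
    with pf have "proj f + fscale (f E) (g k) \<in> fscale.span (g ` {..<Suc k})"
      using gk by (blast intro: fscale.span_add fscale.span_scale)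
    moreover have "proj f + fscale (f E) (g k) = f" by (simp add: proj_def fun_eq_iff)
    ultimately show ?thesis by metis
  qed
qed

definition pairing_functional ::
    "real \<Rightarrow> (nat \<Rightarrow> real) \<Rightarrow> (nat \<Rightarrow> real) \<Rightarrow> ((nat \<Rightarrow> real) \<Rightarrow> (nat \<Rightarrow> real)) \<Rightarrow> real" where
  "pairing_functional p b z = (\<lambda>S. if S \<in> Lop p then lp_pair b (S z) else 0)"

lemma linear_on_Lop_pairing_functional:
  assumes p: "1 < p" and b: "b \<in> lp (p / (p - 1))" and z: "z \<in> lp p"
  shows "linear_on_Lop p (pairing_functional p b z)"
proof -
  note pq = conjugate_exponents_divide[OF p]
  have "lp_pair b ((S + T) z) = lp_pair b (S z) + lp_pair b (T z)" if "S \<in> Lop p" "T \<in> Lop p" for S T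
    using lp_pair_add_right[OF pq Lop_apply_in_lp[OF that(1) z] Lop_apply_in_lp[OF that(2) z] b] by simp
  moreover have "lp_pair b (fscale c (S z)) = c * lp_pair b (S z)" if "S \<in> Lop p" for S c
    by (rule lp_pair_fscale_right[OF pq Lop_apply_in_lp[OF that z] b])
  ultimately show ?thesis
    using Lop_add[OF _ _ p] Lop_fscale[of _ p] p by (simp add: linear_on_Lop_def pairing_functional_def)
qed

lemma pairing_functional_in_Jset:
  assumes T: "T \<in> Lop p" and p: "1 < p" and nT: "opnorm p T = 1" and z: "z \<in> MT p T"
  shows "pairing_functional p (duality_map p (T z)) z \<in> Jset p T"
proof -
  have p0: "p > 0" using p by simp
  note pq = conjugate_exponents_divide[OF p]
  have zl: "z \<in> lp p" and z1: "lpnorm p z = 1" and Tz: "lpnorm p (T z) = 1"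
    using z nT by (auto simp: MT_def)
  then have "T z \<noteq> 0" by auto
  note J = duality_map_norming[OF pq Lop_apply_in_lp[OF T zl] this]
  define F where "F = pairing_functional p (duality_map p (T z)) z"
  have bound: "\<bar>F S\<bar> \<le> opnorm p S" if S: "S \<in> Lop p" for S
  proof -
    have "\<bar>F S\<bar> \<le> lpnorm (p / (p - 1)) (duality_map p (T z)) * lpnorm p (S z)"
      using abs_lp_pair_le[OF pq Lop_apply_in_lp[OF S zl] J(1)] S by (simp add: F_def pairing_functional_def)
    also have "\<dots> \<le> opnorm p S" using J(2) lpnorm_apply_le[OF S p0 zl] z1 by simp
    finally show ?thesis .
  qed
  have FL: "F \<in> Ldual p"
    using linear_on_Lop_pairing_functional[OF p J(1) zl] bound
    unfolding F_def[symmetric] linear_on_Lop_def Ldual_def by (auto intro!: exI[of _ 1])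
  have "dualnorm p F \<le> 1" unfolding dualnorm_def
    using T nT bound by (intro cSUP_least) force+
  moreover have "F T = 1" using J(3) Tz T by (simp add: F_def pairing_functional_def)
  moreover have "\<bar>F T\<bar> \<le> dualnorm p F" using abs_le_dualnorm[OF FL T] nT by simp
  ultimately show ?thesis using FL by (simp add: Jset_def F_def)
qed

lemma Lop_rank_one:
  assumes p: "p > 0" and v: "v \<in> lp p"
  shows "(\<lambda>x. if x \<in> lp p then fscale (x m) v else 0) \<in> Lop p"
proof -
  have "lpnorm p (fscale (x m) v) \<le> lpnorm p v * lpnorm p x" if x: "x \<in> lp p" for x
    using lpnorm_fscale[OF v p, of "x m"] abs_le_lpnorm[OF x p, of m] lpnorm_nonneg[of p v]
    by (simp add: mult.commute mult_left_mono)
  then have "\<exists>C. \<forall>x\<in>lp p. lpnorm p (if x \<in> lp p then fscale (x m) v else 0) \<le> C * lpnorm p x"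
    by auto
  then show ?thesis unfolding Lop_def using lp_add[OF _ _ p] lp_fscale[of _ p] v
    by (auto simp: fscale_def fun_eq_iff algebra_simps)
qed

lemma pairing_functionals_independent:
  fixes x :: "nat \<Rightarrow> nat \<Rightarrow> real" and k :: nat
  assumes T: "T \<in> Lop p" and p: "1 < p" and nT: "opnorm p T = 1"
    and x: "\<And>i. i < k \<Longrightarrow> x i \<in> MT p T"
    and indep: "\<forall>c. (\<Sum>i<k. fscale (c i) (x i)) = 0 \<longrightarrow> (\<forall>i<k. c i = 0)"
    and sum0: "(\<Sum>i<k. fscale (c i) (pairing_functional p (duality_map p (T (x i))) (x i))) = 0"
  shows "\<forall>i<k. c i = 0"
proof (intro allI impI)
  fix j assume j: "j < k"
  have p0: "p > 0" using p by simp
  note pq = conjugate_exponents_divide[OF p]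
  have xl: "x i \<in> lp p" and J: "duality_map p (T (x i)) \<in> lp (p / (p - 1))"
    and J1: "lp_pair (duality_map p (T (x i))) (T (x i)) = 1" if "i < k" for i
  proof -
    show xl: "x i \<in> lp p" using x[OF that] by (simp add: MT_def)
    have Tx: "lpnorm p (T (x i)) = 1" using x[OF that] nT by (simp add: MT_def)
    then have "T (x i) \<noteq> 0" by auto
    from duality_map_norming[OF pq Lop_apply_in_lp[OF T xl] this] Tx
    show "duality_map p (T (x i)) \<in> lp (p / (p - 1))" "lp_pair (duality_map p (T (x i))) (T (x i)) = 1"
      by simp_all
  qed
  \<comment> \<open>evaluate the vanishing combination at the rank-one operators x \<mapsto> x m \<cdot> T (x j)\<close>
  define d where "d i = c i * lp_pair (duality_map p (T (x i))) (T (x j))" for i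
  have "(\<Sum>i<k. fscale (d i) (x i)) = 0"
  proof
    fix m
    define R where "R = (\<lambda>z. if z \<in> lp p then fscale (z m) (T (x j)) else 0)"
    have R: "R \<in> Lop p" unfolding R_def by (rule Lop_rank_one[OF p0 Lop_apply_in_lp[OF T xl[OF j]]])
    have "0 = (\<Sum>i<k. c i * pairing_functional p (duality_map p (T (x i))) (x i) R)"
      using fun_cong[OF sum0, of R] by (simp add: sum_apply)
    also have "\<dots> = (\<Sum>i<k. d i * x i m)"
      using R xl J lp_pair_fscale_right[OF pq Lop_apply_in_lp[OF T xl[OF j]] J]
      by (intro sum.cong) (simp_all add: pairing_functional_def R_def d_def)
    finally show "(\<Sum>i<k. fscale (d i) (x i)) m = 0 m" by (simp add: sum_apply mult.commute)
  qed
  then have "d j = 0" using indep j by blast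
  then show "c j = 0" using J1[OF j] by (simp add: d_def)
qed

lemma Jset_subset_span_pairing_functionals:
  fixes x :: "nat \<Rightarrow> nat \<Rightarrow> real" and k :: nat
  assumes T: "T \<in> Lop p" and p: "1 < p" and nT: "opnorm p T = 1" and dK: "dist_Kop p T < 1"
    and MT: "MT p T = {x i |i. i < k} \<union> {- x i |i. i < k}"
  shows "Jset p T \<subseteq> fscale.span ((\<lambda>i. pairing_functional p (duality_map p (T (x i))) (x i)) ` {..<k})"
proof
  fix f assume f: "f \<in> Jset p T"
  note pq = conjugate_exponents_divide[OF p]
  have xM: "x i \<in> MT p T" if "i < k" for i using MT that by blast
  have xl: "x i \<in> lp p" and "T (x i) \<noteq> 0" if "i < k" for i
    using xM[OF that] nT by (auto simp: MT_def)
  then have J: "duality_map p (T (x i)) \<in> lp (p / (p - 1))" if "i < k" for i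
    using duality_map_norming(1)[OF pq Lop_apply_in_lp[OF T]] that by blast
  show "f \<in> fscale.span ((\<lambda>i. pairing_functional p (duality_map p (T (x i))) (x i)) ` {..<k})"
  proof (rule linear_on_Lop_in_span_of_kernel[where g = "\<lambda>i. pairing_functional p (duality_map p (T (x i))) (x i)", OF p])
    show "linear_on_Lop p f" using f by (simp add: Jset_def Ldual_imp_linear_on_Lop)
    show "linear_on_Lop p (pairing_functional p (duality_map p (T (x i))) (x i))" if "i < k" for i
      by (rule linear_on_Lop_pairing_functional[OF p J[OF that] xl[OF that]])
  next
    fix S assume S: "S \<in> Lop p" and zero: "\<forall>i<k. pairing_functional p (duality_map p (T (x i))) (x i) S = 0"
    show "f S = 0"
    proof (rule Jset_apply_eq_0_of_MT_pairing[OF T p nT dK f S])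
      fix z assume "z \<in> MT p T"
      then obtain i where i: "i < k" and "z = x i \<or> z = - x i" using MT by blast
      moreover have "lp_pair (duality_map p (T (x i))) (S (x i)) = 0"
        using zero i S by (simp add: pairing_functional_def)
      ultimately show "lp_pair (duality_map p (T z)) (S z) = 0"
        using Lop_apply_uminus[OF T xl[OF i]] Lop_apply_uminus[OF S xl[OF i]]
        by (auto simp: duality_map_uminus lp_pair_uminus)
    qed
  qed
qed

context module
begin

lemma independent_family:
  fixes v :: "nat \<Rightarrow> 'b" and k :: nat
  assumes indep: "\<And>c. (\<Sum>i<k. scale (c i) (v i)) = 0 \<Longrightarrow> \<forall>i<k. c i = 0"
  shows "inj_on v {..<k}" "independent (v ` {..<k})"
proof -
  show inj: "inj_on v {..<k}"
  proof (rule inj_onI, rule ccontr)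
    fix i j assume i: "i \<in> {..<k}" and j: "j \<in> {..<k}" and eq: "v i = v j" and "i \<noteq> j"
    define c :: "nat \<Rightarrow> 'a" where "c l = (if l = i then 1 else if l = j then -1 else 0)" for l
    have "(\<Sum>l<k. scale (c l) (v l)) = scale (c i) (v i) + scale (c j) (v j)"
      using i j \<open>i \<noteq> j\<close> by (subst sum.mono_neutral_right[of "{..<k}" "{i, j}"]) (auto simp: c_def)
    also have "\<dots> = 0" using eq \<open>i \<noteq> j\<close> by (simp add: c_def scale_left_distrib[symmetric])
    finally show False using indep[of c] i by (auto simp: c_def)
  qed
  show "independent (v ` {..<k})"
  proof
    assume "dependent (v ` {..<k})"
    then obtain u where u: "\<exists>w\<in>v ` {..<k}. u w \<noteq> 0" and "(\<Sum>w\<in>v ` {..<k}. scale (u w) w) = 0"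
      by (auto simp: dependent_finite)
    then have "(\<Sum>i<k. scale (u (v i)) (v i)) = 0" by (simp add: sum.reindex[OF inj])
    then show False using indep[of "\<lambda>i. u (v i)"] u by auto
  qed
qed

end

theorem corollary3p3:
  fixes p :: real and T :: "(nat \<Rightarrow> real) \<Rightarrow> (nat \<Rightarrow> real)"
    and k :: nat and x :: "nat \<Rightarrow> (nat \<Rightarrow> real)"
  assumes "1 < p"
    and "T \<in> Lop p" and "opnorm p T = 1"
    and "dist_Kop p T < 1"
    and "\<forall>i<k. x i \<in> lp p"
    and "MT p T = {x i |i. i < k} \<union> {- x i |i. i < k}"
    and "\<forall>c. (\<Sum>i<k. fscale (c i) (x i)) = 0 \<longrightarrow> (\<forall>i<k. c i = 0)"
  shows "k_smooth p k T"
proof -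
  note p = assms(1) and T = assms(2) and nT = assms(3) and dK = assms(4) and MT = assms(6)
  define F where "F i = pairing_functional p (duality_map p (T (x i))) (x i)" for i
  have xM: "x i \<in> MT p T" if "i < k" for i using MT that by blast
  have indep: "\<forall>i<k. c i = 0" if "(\<Sum>i<k. fscale (c i) (F i)) = 0" for c
    using pairing_functionals_independent[OF T p nT xM assms(7)] that by (simp add: F_def)
  have "F ` {..<k} \<subseteq> Jset p T"
    using pairing_functional_in_Jset[OF T p nT xM] by (auto simp: F_def)
  moreover have "Jset p T \<subseteq> fscale.span (F ` {..<k})"
    unfolding F_def by (rule Jset_subset_span_pairing_functionals[OF T p nT dK MT])
  ultimately have "fscale.span (F ` {..<k}) = fscale.span (Jset p T)"
    by (intro antisym fscale.span_mono fscale.span_minimal fscale.subspace_span)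
  moreover note F_indep = fscale.independent_family[where v = F, OF indep]
  ultimately show ?thesis unfolding k_smooth_def
    using card_image[OF F_indep(1)] by (intro exI[of _ "F ` {..<k}"]) auto
qed

end
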